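(* Let $T>0$ and let $U_t=(U^1_t,U^2_t)$ with $U^1,U^2\in C^1(\mathbb{R})$ and $U^1_0=U^2_0=0$. Consider the control problem $d\tilde x_t=-\gamma\tilde x_t\,dt-\frac{h\tilde x_t^2-\tilde y_t^2}{\tilde z_t}\,dt+\sqrt{2\kappa_1}\,dU^1_t$, $d\tilde y_t=-\gamma\tilde y_t\,dt-(1+h)\frac{\tilde x_t\tilde y_t}{\tilde z_t}\,dt+\sqrt{2\kappa_2}\,dU^2_t$, $d\tilde z_t=(1-h)\tilde x_t\,dt-d\tilde k_t$, where $\tilde{\mathbf{x}}_t=(\tilde x_t,\tilde y_t,\tilde z_t)\in\mathcal{O}$ and $\tilde k_t$ is continuous, non-decreasing, $\tilde k_0=0$, increasing only when $\tilde z_t=1$. Suppose $(\tilde{\mathbf{x}}_t,\tilde k_t)$ solves this control problem with $\tilde{\mathbf{x}}_0=\tilde{\mathbf{x}}$ and $(\mathbf{x}_t,k_t)$ solves the stochastic reflected system below with $\mathbf{x}_0=\mathbf{x}$, both on the deterministic time interval $[0,T]$. Then for every $\varepsilon>0$ there exists $\tilde\varepsilon>0$ such that for all $\mathbf{x}\in B(\tilde{\mathbf{x}},\tilde\varepsilon)$, $\mathbb{P}\left\{\sup_{0\le t\le T}|\mathbf{x}_t-\tilde{\mathbf{x}}_t|\le\varepsilon\right\}>0.$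
   Context: Let $\mathcal{O}=\mathbb{R}\times\mathbb{R}\times(0,1]$, $\gamma>0$, $h\in(0,1)$, $\kappa_1,\kappa_2>0$, $(W^1_t,W^2_t)$ a standard two-dimensional Brownian motion. The stochastic reflected system is $dx_t=-\gamma x_t\,dt-\frac{hx_t^2-y_t^2}{z_t}\,dt+\sqrt{2\kappa_1}\,dW^1_t$, $dy_t=-\gamma y_t\,dt-(1+h)\frac{x_ty_t}{z_t}\,dt+\sqrt{2\kappa_2}\,dW^2_t$, $dz_t=(1-h)x_t\,dt-dk_t$, with $\mathbf{x}_t=(x_t,y_t,z_t)\in\mathcal{O}$ and $k_t$ continuous, non-decreasing, adapted, $k_0=0$, increasing only when $z_t=1$. $B(\mathbf{y},\varepsilon)$ is the open ball in $\mathbb{R}^3$. *)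

theory Defs
  imports "HOL-Probability.Probability"
begin

definition state_space :: "(real \<times> real \<times> real) set" where
  "state_space = {p. 0 < snd (snd p) \<and> snd (snd p) \<le> 1}"

definition std_BM2 :: "'a measure \<Rightarrow> (real \<Rightarrow> 'a \<Rightarrow> real) \<Rightarrow> (real \<Rightarrow> 'a \<Rightarrow> real) \<Rightarrow> bool" where
  "std_BM2 M W1 W2 \<longleftrightarrow>
     prob_space M \<and>
     (\<forall>t\<ge>0. W1 t \<in> borel_measurable M \<and> W2 t \<in> borel_measurable M) \<and>
     (\<forall>\<omega>\<in>space M. W1 0 \<omega> = 0 \<and> W2 0 \<omega> = 0 \<and>
        continuous_on {0..} (\<lambda>t. W1 t \<omega>) \<and> continuous_on {0..} (\<lambda>t. W2 t \<omega>)) \<and>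
     (\<forall>(n::nat) (\<tau>::nat \<Rightarrow> real). 0 \<le> \<tau> 0 \<and> (\<forall>i<n. \<tau> i < \<tau> (Suc i)) \<longrightarrow>
        prob_space.indep_vars M (\<lambda>_. borel)
          (\<lambda>(b, i) \<omega>. (if b then W1 else W2) (\<tau> (Suc i)) \<omega> - (if b then W1 else W2) (\<tau> i) \<omega>)
          (UNIV \<times> {..<n}) \<and>
        (\<forall>i<n. distributed M lborel (\<lambda>\<omega>. W1 (\<tau> (Suc i)) \<omega> - W1 (\<tau> i) \<omega>)
                   (\<lambda>v. ennreal (normal_density 0 (sqrt (\<tau> (Suc i) - \<tau> i)) v)) \<and>
               distributed M lborel (\<lambda>\<omega>. W2 (\<tau> (Suc i)) \<omega> - W2 (\<tau> i) \<omega>)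
                   (\<lambda>v. ennreal (normal_density 0 (sqrt (\<tau> (Suc i) - \<tau> i)) v))))"

definition reflection_term :: "real \<Rightarrow> (real \<Rightarrow> real) \<Rightarrow> (real \<Rightarrow> real) \<Rightarrow> bool" where
  "reflection_term T z k \<longleftrightarrow>
     k 0 = 0 \<and> continuous_on {0..T} k \<and> mono_on {0..T} k \<and>
     (\<forall>s t. 0 \<le> s \<longrightarrow> s \<le> t \<longrightarrow> t \<le> T \<longrightarrow> (\<forall>r\<in>{s..t}. z r \<noteq> 1) \<longrightarrow> k t = k s)"

text \<open>(x,y,z,k) solves the reflected system on [0,T] driven by the (continuous) signal (V1,V2),
  in integrated form: d x = drift dt + sqrt(2 kappa1) dV1, etc.\<close>
definition reflected_solution ::
  "real \<Rightarrow> real \<Rightarrow> real \<Rightarrow> real \<Rightarrow> real \<Rightarrow> (real \<Rightarrow> real) \<Rightarrow> (real \<Rightarrow> real) \<Rightarrow>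
   (real \<Rightarrow> real) \<Rightarrow> (real \<Rightarrow> real) \<Rightarrow> (real \<Rightarrow> real) \<Rightarrow> (real \<Rightarrow> real) \<Rightarrow> bool" where
  "reflected_solution \<gamma> h \<kappa>1 \<kappa>2 T V1 V2 x y z k \<longleftrightarrow>
     continuous_on {0..T} x \<and> continuous_on {0..T} y \<and> continuous_on {0..T} z \<and>
     (\<forall>t\<in>{0..T}. (x t, y t, z t) \<in> state_space) \<and>
     reflection_term T z k \<and>
     (\<forall>t\<in>{0..T}.
        x t = x 0 + integral {0..t} (\<lambda>s. - \<gamma> * x s - (h * (x s)\<^sup>2 - (y s)\<^sup>2) / z s)
                  + sqrt (2 * \<kappa>1) * (V1 t - V1 0) \<and>
        y t = y 0 + integral {0..t} (\<lambda>s. - \<gamma> * y s - (1 + h) * (x s * y s) / z s)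
                  + sqrt (2 * \<kappa>2) * (V2 t - V2 0) \<and>
        z t = z 0 + integral {0..t} (\<lambda>s. (1 - h) * x s) - (k t - k 0))"

end

theory Submission
  imports Defs
begin

text \<open>First, deterministic stability: along the control the
  \<open>z\<close>-coordinate stays bounded away from \<open>0\<close> and \<open>x, y\<close> stay bounded, so near the control the
  drifts are Lipschitz. The \<open>x\<close>- and \<open>y\<close>-errors then satisfy an integral inequality whose
  forcing term is the uniform distance between the driving signals, and the comparison
  principle for the one-sided Skorokhod problem bounds the error of the reflected
  \<open>z\<close>-coordinate by twice that of its unreflected part. Gronwall's inequality, used as long as
  the error stays small, shows that a solution starting near the control and driven by a
  signal uniformly close to the control stays \<open>\<epsilon>\<close>-close to it on \<open>[0, T]\<close>.

  Second, a Brownian path stays in any uniform tube around a Lipschitz path with positive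
  probability. Split \<open>[0, T]\<close> into \<open>N\<close> blocks: on each block the Gaussian increment is
  \<open>\<eta>/N\<close>-close to that of the control with probability of order \<open>1/N\<close>, while fourth-moment
  bounds on the dyadic increments make the oscillation inside the block large only with
  probability \<open>O(1/N\<^sup>2)\<close>. For large \<open>N\<close> each block event thus has positive probability, and
  the blocks are independent.\<close>

section \<open>Deterministic stability of the reflected system\<close>

lemma gronwall_le_exp:
  fixes e :: "real \<Rightarrow> real"
  assumes "0 \<le> t1" and cont: "continuous_on {0..t1} e" and "0 < B"
    and e_le: "\<And>t. t \<in> {0..t1} \<Longrightarrow> e t \<le> A + B * integral {0..t} e"
    and t: "t \<in> {0..t1}"
  shows "e t \<le> A * exp (B * t)"
proof -
  define G where "G u = A + B * integral {0..u} e" for u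
  define H where "H u = G u * exp (- B * u)" for u
  have int_cont: "continuous_on {0..t1} (\<lambda>u. integral {0..u} e)"
    by (rule indefinite_integral_continuous_1) (rule integrable_continuous_real[OF cont])
  have "continuous_on {0..t} H"
    unfolding H_def G_def
    by (intro continuous_intros continuous_on_subset[OF int_cont]) (use t in auto)
  then have "H t \<le> H 0"
  proof (rule DERIV_nonpos_imp_decreasing_open[rotated 2])
    fix s assume s: "0 < s" "s < t"
    have "((\<lambda>u. integral {0..u} e) has_real_derivative e s) (at s)"
      using integral_has_vector_derivative[OF cont, of s] s t
      by (simp add: has_real_derivative_iff_has_vector_derivative at_within_Icc_at)
    then have "(H has_real_derivative B * e s * exp (- B * s) + G s * (exp (- B * s) * (- B))) (at s)"
      unfolding H_def[abs_def] G_def[abs_def] by (auto intro!: derivative_eq_intros)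
    moreover have "e s \<le> G s" using e_le[of s] s t by (simp add: G_def)
    then have "B * e s * exp (- B * s) + G s * (exp (- B * s) * (- B)) \<le> 0"
      using \<open>0 < B\<close> by (simp add: algebra_simps mult_left_mono)
    ultimately show "\<exists>y. (H has_real_derivative y) (at s) \<and> y \<le> 0" by blast
  qed (use t in auto)
  then have "G t \<le> A * exp (B * t)"
    by (simp add: H_def G_def exp_minus field_simps)
  moreover have "e t \<le> G t" using e_le[OF t] by (simp add: G_def)
  ultimately show ?thesis by linarith
qed

text \<open>The usual continuity argument: the integral inequality is only available while the
  error stays below \<open>\<rho>\<close>, and Gronwall's bound shows that the error never reaches \<open>\<rho>\<close>.\<close>
lemma gronwall_bootstrap:
  fixes e :: "real \<Rightarrow> real"
  assumes cont: "continuous_on {0..T} e" and "0 < B" and "0 \<le> A" and "e 0 \<le> A"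
    and small: "A * exp (B * T) < \<rho>"
    and e_le: "\<And>t. t \<in> {0..T} \<Longrightarrow> (\<And>s. s \<in> {0..t} \<Longrightarrow> e s \<le> \<rho>) \<Longrightarrow>
                  e t \<le> A + B * integral {0..t} e"
  shows "\<forall>t\<in>{0..T}. e t < \<rho>"
proof (rule ccontr)
  assume "\<not> ?thesis"
  then obtain t' where "t' \<in> {0..T}" "\<rho> \<le> e t'" by force
  define Z where "Z = {0..T} \<inter> e -` {\<rho>..}"
  have "closed Z" unfolding Z_def by (rule continuous_closed_preimage[OF cont]) auto
  moreover have "Z \<noteq> {}" using \<open>t' \<in> {0..T}\<close> \<open>\<rho> \<le> e t'\<close> by (auto simp: Z_def)
  moreover have "bdd_below Z" unfolding Z_def by (auto intro: bdd_belowI[of _ 0])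
  ultimately have "Inf Z \<in> Z" by (intro closed_contains_Inf)
  define t1 where "t1 = Inf Z"
  have t1: "t1 \<in> {0..T}" "\<rho> \<le> e t1" using \<open>Inf Z \<in> Z\<close> by (auto simp: Z_def t1_def)
  have "A \<le> A * exp (B * T)"
    using \<open>0 < B\<close> \<open>0 \<le> A\<close> t1 by (simp add: mult_le_cancel_left1)
  then have "0 < t1" using t1 \<open>e 0 \<le> A\<close> small by (cases "t1 = 0") auto
  have below: "e s < \<rho>" if "s \<in> {0..<t1}" for s
    using that cInf_lower[OF _ \<open>bdd_below Z\<close>, of s] t1 by (force simp: Z_def t1_def)
  have "closed ({0..t1} \<inter> e -` {..\<rho>})"
    by (rule continuous_closed_preimage[OF continuous_on_subset[OF cont]]) (use t1 in auto)
  moreover have "{0..<t1} \<subseteq> {0..t1} \<inter> e -` {..\<rho>}"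
    using below by fastforce
  ultimately have "closure {0..<t1} \<subseteq> {0..t1} \<inter> e -` {..\<rho>}"
    by (intro closure_minimal)
  then have le_\<rho>: "e s \<le> \<rho>" if "s \<in> {0..t1}" for s
    using that \<open>0 < t1\<close> by (auto simp: closure_atLeastLessThan)
  have "e t1 \<le> A * exp (B * t1)"
  proof (rule gronwall_le_exp[OF _ continuous_on_subset[OF cont] \<open>0 < B\<close>])
    fix t assume "t \<in> {0..t1}"
    then show "e t \<le> A + B * integral {0..t} e"
      using t1 le_\<rho> by (intro e_le) auto
  qed (use t1 in auto)
  also have "\<dots> \<le> A * exp (B * T)"
    using \<open>0 \<le> A\<close> \<open>0 < B\<close> t1 by (intro mult_left_mono) auto
  finally show False using small t1 by linarith
qed

text \<open>Comparison principle for the one-sided Skorokhod problem on \<open>(-\<infinity>, 1]\<close>. If \<open>k - k'\<close>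
  exceeded \<open>m\<close> at \<open>t\<close>, then after the last time \<open>s\<^sub>0 \<le> t\<close> with \<open>k - k' \<le> m\<close> we would have
  \<open>z < z' \<le> 1\<close>, so \<open>k\<close> stays constant on \<open>[s\<^sub>0, t]\<close> while \<open>k'\<close> does not decrease.\<close>
lemma reflection_term_diff_le:
  fixes z z' w w' k k' :: "real \<Rightarrow> real"
  assumes refl: "reflection_term T z k" and refl': "reflection_term T z' k'"
    and z_eq: "\<And>s. s \<in> {0..T} \<Longrightarrow> z s = w s - k s"
    and z'_eq: "\<And>s. s \<in> {0..T} \<Longrightarrow> z' s = w' s - k' s"
    and z'_le: "\<And>s. s \<in> {0..T} \<Longrightarrow> z' s \<le> 1"
    and t: "t \<in> {0..T}"
    and w_close: "\<And>s. s \<in> {0..t} \<Longrightarrow> \<bar>w s - w' s\<bar> \<le> m"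
  shows "k t - k' t \<le> m"
proof (rule ccontr)
  assume gt_t: "\<not> k t - k' t \<le> m"
  have k_cont: "continuous_on {0..T} k" and k_const: "\<And>s t. 0 \<le> s \<Longrightarrow> s \<le> t \<Longrightarrow> t \<le> T \<Longrightarrow>
      (\<forall>r\<in>{s..t}. z r \<noteq> 1) \<Longrightarrow> k t = k s"
    using refl unfolding reflection_term_def by blast+
  have "continuous_on {0..T} k'" and "mono_on {0..T} k'"
    using refl' unfolding reflection_term_def by blast+
  define A where "A = {0..t} \<inter> (\<lambda>s. k s - k' s) -` {..m}"
  have "continuous_on {0..t} (\<lambda>s. k s - k' s)"
    by (intro continuous_intros continuous_on_subset[OF k_cont]
        continuous_on_subset[OF \<open>continuous_on {0..T} k'\<close>]) (use t in auto)
  then have "closed A" unfolding A_def by (rule continuous_closed_preimage) auto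
  moreover have "0 \<in> A"
    using refl refl' w_close[of 0] t by (auto simp: A_def reflection_term_def)
  moreover have bdd: "bdd_above A" unfolding A_def by (auto intro: bdd_aboveI[of _ t])
  ultimately have "Sup A \<in> A" by (intro closed_contains_Sup) auto
  define s0 where "s0 = Sup A"
  have s0: "0 \<le> s0" "s0 < t"
  proof -
    have "s0 \<in> {0..t}" "s0 \<noteq> t" using \<open>Sup A \<in> A\<close> gt_t by (auto simp: s0_def A_def)
    then show "0 \<le> s0" "s0 < t" by auto
  qed
  have gt: "k s - k' s > m" if "s \<in> {s0<..t}" for s
    using that s0 cSup_upper[OF _ bdd, of s] by (force simp: A_def s0_def)
  have "z s \<noteq> 1" if "s \<in> {s0<..t}" for s
  proof -
    have "s \<in> {0..T}" using that s0 t by auto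
    then have "z s < z' s"
      using z_eq z'_eq gt[OF that] w_close[of s] that s0 by fastforce
    then show ?thesis using z'_le \<open>s \<in> {0..T}\<close> by fastforce
  qed
  then have k_eq: "k s = k t" if "s \<in> {s0<..t}" for s
    using that s0 t by (intro k_const[symmetric]) auto
  have "{s0<..t} \<subseteq> {s0..t} \<inter> k -` {k t}"
  proof
    fix s assume "s \<in> {s0<..t}"
    then show "s \<in> {s0..t} \<inter> k -` {k t}" using k_eq[of s] by simp
  qed
  moreover have "closed ({s0..t} \<inter> k -` {k t})"
    by (rule continuous_closed_preimage[OF continuous_on_subset[OF k_cont]]) (use s0 t in auto)
  ultimately have "closure {s0<..t} \<subseteq> {s0..t} \<inter> k -` {k t}"
    by (rule closure_minimal)
  moreover have "s0 \<in> closure {s0<..t}" using s0 by (simp add: closure_greaterThanAtMost)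
  ultimately have "k s0 = k t" by blast
  moreover have "k' s0 \<le> k' t"
    by (rule mono_onD[OF \<open>mono_on {0..T} k'\<close>]) (use s0 t in auto)
  ultimately have "m < k s0 - k' s0" using gt_t by linarith
  with \<open>Sup A \<in> A\<close> show False by (auto simp: A_def s0_def)
qed

lemma reflected_path_diff_le:
  fixes z z' w w' k k' :: "real \<Rightarrow> real"
  assumes "reflection_term T z k" and "reflection_term T z' k'"
    and "\<And>s. s \<in> {0..T} \<Longrightarrow> z s = w s - k s" and "\<And>s. s \<in> {0..T} \<Longrightarrow> z' s = w' s - k' s"
    and "\<And>s. s \<in> {0..T} \<Longrightarrow> z s \<le> 1" and "\<And>s. s \<in> {0..T} \<Longrightarrow> z' s \<le> 1"
    and t: "t \<in> {0..T}"
    and w_close: "\<And>s. s \<in> {0..t} \<Longrightarrow> \<bar>w s - w' s\<bar> \<le> m"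
  shows "\<bar>z t - z' t\<bar> \<le> 2 * m"
proof -
  have "k t - k' t \<le> m"
    using assms by (intro reflection_term_diff_le[of T z k z' k' w w']) auto
  moreover have "k' t - k t \<le> m"
    using assms by (intro reflection_term_diff_le[of T z' k' z k w' w]) (auto simp: abs_minus_commute)
  moreover have "\<bar>w t - w' t\<bar> \<le> m" using w_close t by auto
  ultimately show ?thesis using assms(3,4) t by (auto simp: abs_le_iff)
qed

lemma abs_diff_divide_le:
  fixes a a' z z' c :: real
  assumes "0 < c" and "c \<le> z" and "c \<le> z'"
  shows "\<bar>a / z - a' / z'\<bar> \<le> \<bar>a - a'\<bar> / c + \<bar>a'\<bar> * \<bar>z - z'\<bar> / c\<^sup>2"
proof -
  have pos: "0 < z" "0 < z'" using assms by auto
  have "a / z - a' / z' = (a - a') / z + a' * (z' - z) / (z * z')"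
    using pos by (simp add: field_simps)
  moreover have "\<bar>(a - a') / z\<bar> \<le> \<bar>a - a'\<bar> / c"
    using pos assms by (simp add: abs_div frac_le)
  moreover have "c\<^sup>2 \<le> z * z'"
    using assms unfolding power2_eq_square by (intro mult_mono) auto
  then have "\<bar>a' * (z' - z) / (z * z')\<bar> \<le> \<bar>a'\<bar> * \<bar>z - z'\<bar> / c\<^sup>2"
    using pos assms by (simp add: abs_div abs_mult frac_le abs_minus_commute)
  ultimately show ?thesis by (smt (verit))
qed

text \<open>Both drifts of the \<open>x\<close>- and \<open>y\<close>-equations have the shape \<open>-\<gamma> v - a / z\<close>.\<close>
lemma linear_minus_quotient_lipschitz:
  fixes \<gamma> c R dx dy v v' a a' z z' :: real
  assumes "0 \<le> \<gamma>" and "0 < c" and "c \<le> z" and "c \<le> z'" and "0 \<le> R"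
    and "\<bar>v - v'\<bar> \<le> dx + dy" and "\<bar>a - a'\<bar> \<le> 2 * R * (dx + dy)" and "\<bar>a'\<bar> \<le> 2 * R\<^sup>2"
  shows "\<bar>(- \<gamma> * v - a / z) - (- \<gamma> * v' - a' / z')\<bar>
           \<le> (\<gamma> + 2 * R / c + 2 * R\<^sup>2 / c\<^sup>2) * (dx + dy + \<bar>z - z'\<bar>)"
proof -
  define d where "d = dx + dy"
  have "0 \<le> d" using assms(6) unfolding d_def by linarith
  have "\<bar>(- \<gamma> * v - a / z) - (- \<gamma> * v' - a' / z')\<bar> = \<bar>- (\<gamma> * (v - v')) - (a / z - a' / z')\<bar>"
    by (rule arg_cong[where f = abs]) (simp add: algebra_simps)
  also have "\<dots> \<le> \<gamma> * \<bar>v - v'\<bar> + \<bar>a / z - a' / z'\<bar>"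
    using abs_triangle_ineq4[of "- (\<gamma> * (v - v'))"] \<open>0 \<le> \<gamma>\<close> by (simp add: abs_mult)
  also have "\<dots> \<le> \<gamma> * d + (\<bar>a - a'\<bar> / c + \<bar>a'\<bar> * \<bar>z - z'\<bar> / c\<^sup>2)"
    using assms abs_diff_divide_le[of c z z' a a'] by (intro add_mono mult_left_mono) (auto simp: d_def)
  also have "\<dots> \<le> \<gamma> * d + (2 * R * d / c + 2 * R\<^sup>2 * \<bar>z - z'\<bar> / c\<^sup>2)"
    using assms by (intro add_mono divide_right_mono mult_right_mono) (auto simp: d_def)
  also have "\<dots> \<le> \<gamma> * d + (2 * R * d / c + 2 * R\<^sup>2 * \<bar>z - z'\<bar> / c\<^sup>2)
                  + (\<gamma> * \<bar>z - z'\<bar> + 2 * R * \<bar>z - z'\<bar> / c + 2 * R\<^sup>2 * d / c\<^sup>2)"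
    using assms \<open>0 \<le> d\<close> by (simp add: add_nonneg_nonneg)
  also have "\<dots> = (\<gamma> + 2 * R / c + 2 * R\<^sup>2 / c\<^sup>2) * (dx + dy + \<bar>z - z'\<bar>)"
    using \<open>0 < c\<close> by (simp add: d_def field_simps)
  finally show ?thesis .
qed

lemma drift_x_lipschitz:
  fixes \<gamma> h c R x y z x' y' z' :: real
  assumes "0 \<le> \<gamma>" and "0 \<le> h" and "h \<le> 1" and "0 < c" and "c \<le> z" and "c \<le> z'"
    and "\<bar>x\<bar> \<le> R" and "\<bar>x'\<bar> \<le> R" and "\<bar>y\<bar> \<le> R" and "\<bar>y'\<bar> \<le> R"
  shows "\<bar>(- \<gamma> * x - (h * x\<^sup>2 - y\<^sup>2) / z) - (- \<gamma> * x' - (h * x'\<^sup>2 - y'\<^sup>2) / z')\<bar>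
     \<le> (\<gamma> + 2 * R / c + 2 * R\<^sup>2 / c\<^sup>2) * (\<bar>x - x'\<bar> + \<bar>y - y'\<bar> + \<bar>z - z'\<bar>)"
proof -
  have sq: "\<bar>u\<^sup>2 - u'\<^sup>2\<bar> \<le> 2 * R * \<bar>u - u'\<bar>" if "\<bar>u\<bar> \<le> R" "\<bar>u'\<bar> \<le> R" for u u' :: real
  proof -
    have "\<bar>u\<^sup>2 - u'\<^sup>2\<bar> = \<bar>u + u'\<bar> * \<bar>u - u'\<bar>"
      by (simp add: power2_eq_square algebra_simps flip: abs_mult)
    also have "\<dots> \<le> 2 * R * \<bar>u - u'\<bar>" using that by (intro mult_right_mono) auto
    finally show ?thesis .
  qed
  have "\<bar>(h * x\<^sup>2 - y\<^sup>2) - (h * x'\<^sup>2 - y'\<^sup>2)\<bar> = \<bar>h * (x\<^sup>2 - x'\<^sup>2) - (y\<^sup>2 - y'\<^sup>2)\<bar>"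
    by (rule arg_cong[where f = abs]) (simp add: algebra_simps)
  also have "\<dots> \<le> h * \<bar>x\<^sup>2 - x'\<^sup>2\<bar> + \<bar>y\<^sup>2 - y'\<^sup>2\<bar>"
    using abs_triangle_ineq4[of "h * (x\<^sup>2 - x'\<^sup>2)"] \<open>0 \<le> h\<close> by (simp add: abs_mult)
  also have "\<dots> \<le> 1 * (2 * R * \<bar>x - x'\<bar>) + 2 * R * \<bar>y - y'\<bar>"
    using assms sq by (intro add_mono mult_mono) auto
  also have "\<dots> = 2 * R * (\<bar>x - x'\<bar> + \<bar>y - y'\<bar>)"
    by (simp add: algebra_simps)
  finally have "\<bar>(h * x\<^sup>2 - y\<^sup>2) - (h * x'\<^sup>2 - y'\<^sup>2)\<bar> \<le> 2 * R * (\<bar>x - x'\<bar> + \<bar>y - y'\<bar>)" .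
  moreover have "\<bar>h * x'\<^sup>2 - y'\<^sup>2\<bar> \<le> 2 * R\<^sup>2"
  proof -
    have "x'\<^sup>2 \<le> R\<^sup>2" "y'\<^sup>2 \<le> R\<^sup>2"
      using power_mono[OF assms(8) abs_ge_zero, of 2] power_mono[OF assms(10) abs_ge_zero, of 2]
      by simp_all
    moreover have "0 \<le> h * x'\<^sup>2" "h * x'\<^sup>2 \<le> x'\<^sup>2" using assms by (simp_all add: mult_left_le_one_le)
    ultimately show ?thesis
      using zero_le_power2[of R] zero_le_power2[of y'] unfolding abs_le_iff by linarith
  qed
  ultimately show ?thesis
    using assms by (intro linear_minus_quotient_lipschitz) auto
qed

lemma drift_y_lipschitz:
  fixes \<gamma> h c R x y z x' y' z' :: real
  assumes "0 \<le> \<gamma>" and "0 \<le> h" and "h \<le> 1" and "0 < c" and "c \<le> z" and "c \<le> z'"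
    and "\<bar>x\<bar> \<le> R" and "\<bar>x'\<bar> \<le> R" and "\<bar>y\<bar> \<le> R" and "\<bar>y'\<bar> \<le> R"
  shows "\<bar>(- \<gamma> * y - (1 + h) * (x * y) / z) - (- \<gamma> * y' - (1 + h) * (x' * y') / z')\<bar>
     \<le> (\<gamma> + 2 * R / c + 2 * R\<^sup>2 / c\<^sup>2) * (\<bar>x - x'\<bar> + \<bar>y - y'\<bar> + \<bar>z - z'\<bar>)"
proof -
  have "(1 + h) * (x * y) - (1 + h) * (x' * y') = (1 + h) * (x * (y - y') + y' * (x - x'))"
    by (simp add: algebra_simps)
  then have "\<bar>(1 + h) * (x * y) - (1 + h) * (x' * y')\<bar> = (1 + h) * \<bar>x * (y - y') + y' * (x - x')\<bar>"
    using \<open>0 \<le> h\<close> by (simp add: abs_mult)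
  also have "\<dots> \<le> 2 * (\<bar>x\<bar> * \<bar>y - y'\<bar> + \<bar>y'\<bar> * \<bar>x - x'\<bar>)"
    using assms by (intro mult_mono) (auto simp: abs_triangle_ineq simp flip: abs_mult)
  also have "\<dots> \<le> 2 * (R * \<bar>y - y'\<bar> + R * \<bar>x - x'\<bar>)"
    using assms by (intro mult_left_mono add_mono mult_right_mono) auto
  also have "\<dots> = 2 * R * (\<bar>x - x'\<bar> + \<bar>y - y'\<bar>)"
    by (simp add: algebra_simps)
  finally have "\<bar>(1 + h) * (x * y) - (1 + h) * (x' * y')\<bar> \<le> 2 * R * (\<bar>x - x'\<bar> + \<bar>y - y'\<bar>)" .
  moreover have "\<bar>(1 + h) * (x' * y')\<bar> \<le> 2 * R\<^sup>2"
  proof -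
    have "\<bar>x' * y'\<bar> \<le> R * R" using assms by (simp add: abs_mult mult_mono)
    then show ?thesis
      using assms by (simp add: abs_mult power2_eq_square mult_mono)
  qed
  ultimately show ?thesis
    using assms by (intro linear_minus_quotient_lipschitz) auto
qed

lemma reflected_solutionD:
  assumes "reflected_solution \<gamma> h \<kappa>1 \<kappa>2 T V1 V2 x y z k"
  shows "continuous_on {0..T} x" "continuous_on {0..T} y" "continuous_on {0..T} z"
    and "\<And>t. t \<in> {0..T} \<Longrightarrow> 0 < z t" "\<And>t. t \<in> {0..T} \<Longrightarrow> z t \<le> 1"
    and "reflection_term T z k"
    and "\<And>t. t \<in> {0..T} \<Longrightarrow> x t = x 0 + integral {0..t} (\<lambda>s. - \<gamma> * x s - (h * (x s)\<^sup>2 - (y s)\<^sup>2) / z s)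
                  + sqrt (2 * \<kappa>1) * (V1 t - V1 0)"
    and "\<And>t. t \<in> {0..T} \<Longrightarrow> y t = y 0 + integral {0..t} (\<lambda>s. - \<gamma> * y s - (1 + h) * (x s * y s) / z s)
                  + sqrt (2 * \<kappa>2) * (V2 t - V2 0)"
    and "\<And>t. t \<in> {0..T} \<Longrightarrow> z t = z 0 + integral {0..t} (\<lambda>s. (1 - h) * x s) - (k t - k 0)"
proof -
  note sol = assms[unfolded reflected_solution_def]
  then show "continuous_on {0..T} x" "continuous_on {0..T} y" "continuous_on {0..T} z"
    and "reflection_term T z k"
    by blast+
  from sol have "\<forall>t\<in>{0..T}. (x t, y t, z t) \<in> state_space" by blast
  then show "\<And>t. t \<in> {0..T} \<Longrightarrow> 0 < z t" "\<And>t. t \<in> {0..T} \<Longrightarrow> z t \<le> 1"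
    by (auto simp: state_space_def)
  from sol show "\<And>t. t \<in> {0..T} \<Longrightarrow> x t = x 0 + integral {0..t} (\<lambda>s. - \<gamma> * x s - (h * (x s)\<^sup>2 - (y s)\<^sup>2) / z s)
                  + sqrt (2 * \<kappa>1) * (V1 t - V1 0)"
    and "\<And>t. t \<in> {0..T} \<Longrightarrow> y t = y 0 + integral {0..t} (\<lambda>s. - \<gamma> * y s - (1 + h) * (x s * y s) / z s)
                  + sqrt (2 * \<kappa>2) * (V2 t - V2 0)"
    and "\<And>t. t \<in> {0..T} \<Longrightarrow> z t = z 0 + integral {0..t} (\<lambda>s. (1 - h) * x s) - (k t - k 0)"
    by blast+
qed

lemma integral_diff_abs_le:
  fixes f g e :: "real \<Rightarrow> real"
  assumes "continuous_on {0..t} f" and "continuous_on {0..t} g" and "continuous_on {0..t} e"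
    and "\<And>s. s \<in> {0..t} \<Longrightarrow> \<bar>f s - g s\<bar> \<le> L * e s"
  shows "\<bar>integral {0..t} f - integral {0..t} g\<bar> \<le> L * integral {0..t} e"
proof -
  have "f integrable_on {0..t}" "g integrable_on {0..t}"
    using assms(1,2) by (auto intro: integrable_continuous_real)
  then have "integral {0..t} f - integral {0..t} g = integral {0..t} (\<lambda>s. f s - g s)"
    by (simp add: integral_diff)
  also have "\<bar>\<dots>\<bar> \<le> integral {0..t} (\<lambda>s. L * e s)"
  proof (rule integral_norm_bound_integral[where f = "\<lambda>s. f s - g s", unfolded real_norm_def])
    show "(\<lambda>s. f s - g s) integrable_on {0..t}" "(\<lambda>s. L * e s) integrable_on {0..t}"
      using assms by (auto intro!: integrable_continuous_real continuous_intros)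
  qed (use assms in auto)
  finally show ?thesis by simp
qed

lemma integral_equation_diff_le:
  fixes u u' f g e V U :: "real \<Rightarrow> real"
  assumes "u t = u 0 + integral {0..t} f + \<sigma> * (V t - V 0)"
    and "u' t = u' 0 + integral {0..t} g + \<sigma> * (U t - U 0)"
    and "continuous_on {0..t} f" and "continuous_on {0..t} g" and "continuous_on {0..t} e"
    and "\<And>s. s \<in> {0..t} \<Longrightarrow> \<bar>f s - g s\<bar> \<le> L * e s"
    and "0 \<le> \<sigma>" and "\<bar>(V t - V 0) - (U t - U 0)\<bar> \<le> \<delta>"
  shows "\<bar>u t - u' t\<bar> \<le> \<bar>u 0 - u' 0\<bar> + L * integral {0..t} e + \<sigma> * \<delta>"
proof -
  have "u t - u' t = (u 0 - u' 0) + (integral {0..t} f - integral {0..t} g)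
                     + \<sigma> * ((V t - V 0) - (U t - U 0))"
    using assms(1,2) by (simp add: algebra_simps)
  moreover have "\<bar>\<sigma> * ((V t - V 0) - (U t - U 0))\<bar> \<le> \<sigma> * \<delta>"
    using assms(7,8) by (simp add: abs_mult mult_left_mono)
  ultimately show ?thesis
    using integral_diff_abs_le[OF assms(3-6)] by linarith
qed

context
  fixes \<gamma> h \<kappa>1 \<kappa>2 T c R \<delta> :: real
    and U1 U2 xt yt zt kt V1 V2 x y z k :: "real \<Rightarrow> real"
  assumes \<gamma>: "0 \<le> \<gamma>" and h: "0 \<le> h" "h \<le> 1" and \<kappa>: "0 \<le> \<kappa>1" "0 \<le> \<kappa>2"
    and control: "reflected_solution \<gamma> h \<kappa>1 \<kappa>2 T U1 U2 xt yt zt kt"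
    and sol: "reflected_solution \<gamma> h \<kappa>1 \<kappa>2 T V1 V2 x y z k"
    and c: "0 < c" and zt_ge: "\<And>t. t \<in> {0..T} \<Longrightarrow> 2 * c \<le> zt t"
    and xt_le: "\<And>t. t \<in> {0..T} \<Longrightarrow> \<bar>xt t\<bar> + 1 \<le> R"
    and yt_le: "\<And>t. t \<in> {0..T} \<Longrightarrow> \<bar>yt t\<bar> + 1 \<le> R"
    and signal_close: "\<And>t. t \<in> {0..T} \<Longrightarrow>
          \<bar>(V1 t - V1 0) - (U1 t - U1 0)\<bar> \<le> \<delta> \<and> \<bar>(V2 t - V2 0) - (U2 t - U2 0)\<bar> \<le> \<delta>"
begin

lemma bounds_near_control:
  assumes "s \<in> {0..T}" and "\<bar>x s - xt s\<bar> + \<bar>y s - yt s\<bar> + \<bar>z s - zt s\<bar> \<le> min c 1"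
  shows "\<bar>x s\<bar> \<le> R" "\<bar>xt s\<bar> \<le> R" "\<bar>y s\<bar> \<le> R" "\<bar>yt s\<bar> \<le> R" "c \<le> z s" "c \<le> zt s"
  using assms xt_le[of s] yt_le[of s] zt_ge[of s] c by auto

lemma xy_error_le:
  defines "e \<equiv> \<lambda>s. \<bar>x s - xt s\<bar> + \<bar>y s - yt s\<bar> + \<bar>z s - zt s\<bar>"
    and "L \<equiv> \<gamma> + 2 * R / c + 2 * R\<^sup>2 / c\<^sup>2"
  assumes t: "t \<in> {0..T}" and near: "\<And>s. s \<in> {0..t} \<Longrightarrow> e s \<le> min c 1"
  shows "\<bar>x t - xt t\<bar> \<le> \<bar>x 0 - xt 0\<bar> + L * integral {0..t} e + sqrt (2 * \<kappa>1) * \<delta>"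
    and "\<bar>y t - yt t\<bar> \<le> \<bar>y 0 - yt 0\<bar> + L * integral {0..t} e + sqrt (2 * \<kappa>2) * \<delta>"
proof -
  note S = reflected_solutionD[OF sol] and C = reflected_solutionD[OF control]
  have sub: "{0..t} \<subseteq> {0..T}" using t by auto
  have cont: "continuous_on {0..t} x" "continuous_on {0..t} y" "continuous_on {0..t} z"
      "continuous_on {0..t} xt" "continuous_on {0..t} yt" "continuous_on {0..t} zt"
    using S(1-3) C(1-3) continuous_on_subset[OF _ sub] by blast+
  have "z s \<noteq> 0" "zt s \<noteq> 0" if "s \<in> {0..t}" for s
    using S(4) C(4) that sub by force+
  note cont_drift = cont[THEN continuous_on_subset, OF order_refl] this
  have "continuous_on {0..t} e" unfolding e_def using cont by (intro continuous_intros)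
  have region: "\<bar>x s\<bar> \<le> R" "\<bar>xt s\<bar> \<le> R" "\<bar>y s\<bar> \<le> R" "\<bar>yt s\<bar> \<le> R" "c \<le> z s" "c \<le> zt s"
    if "s \<in> {0..t}" for s
    using bounds_near_control[of s] near[OF that] that sub unfolding e_def by auto
  show "\<bar>x t - xt t\<bar> \<le> \<bar>x 0 - xt 0\<bar> + L * integral {0..t} e + sqrt (2 * \<kappa>1) * \<delta>"
  proof (rule integral_equation_diff_le[OF S(7)[OF t] C(7)[OF t]])
    fix s assume "s \<in> {0..t}"
    then show "\<bar>(- \<gamma> * x s - (h * (x s)\<^sup>2 - (y s)\<^sup>2) / z s)
                - (- \<gamma> * xt s - (h * (xt s)\<^sup>2 - (yt s)\<^sup>2) / zt s)\<bar> \<le> L * e s"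
      unfolding L_def e_def using region[of s] \<gamma> h c by (intro drift_x_lipschitz) auto
  qed (use cont_drift \<open>continuous_on {0..t} e\<close> signal_close[OF t] \<kappa> in \<open>auto intro!: continuous_intros\<close>)
  show "\<bar>y t - yt t\<bar> \<le> \<bar>y 0 - yt 0\<bar> + L * integral {0..t} e + sqrt (2 * \<kappa>2) * \<delta>"
  proof (rule integral_equation_diff_le[OF S(8)[OF t] C(8)[OF t]])
    fix s assume "s \<in> {0..t}"
    then show "\<bar>(- \<gamma> * y s - (1 + h) * (x s * y s) / z s)
                - (- \<gamma> * yt s - (1 + h) * (xt s * yt s) / zt s)\<bar> \<le> L * e s"
      unfolding L_def e_def using region[of s] \<gamma> h c by (intro drift_y_lipschitz) auto
  qed (use cont_drift \<open>continuous_on {0..t} e\<close> signal_close[OF t] \<kappa> in \<open>auto intro!: continuous_intros\<close>)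
qed

text \<open>The \<open>z\<close>-equation has no noise; its reflection terms are controlled by the comparison
  principle applied to the unreflected paths \<open>z 0 + \<integral>\<^sub>0\<^sup>s (1 - h) x\<close>.\<close>
lemma z_error_le:
  defines "e \<equiv> \<lambda>s. \<bar>x s - xt s\<bar> + \<bar>y s - yt s\<bar> + \<bar>z s - zt s\<bar>"
  assumes t: "t \<in> {0..T}"
  shows "\<bar>z t - zt t\<bar> \<le> 2 * (\<bar>z 0 - zt 0\<bar> + integral {0..t} e)"
proof -
  note S = reflected_solutionD[OF sol] and C = reflected_solutionD[OF control]
  define w where "w s = z 0 + integral {0..s} (\<lambda>r. (1 - h) * x r)" for s
  define w' where "w' s = zt 0 + integral {0..s} (\<lambda>r. (1 - h) * xt r)" for s
  have "k 0 = 0" "kt 0 = 0" using S(6) C(6) unfolding reflection_term_def by blast+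
  then have z_eq: "z s = w s - k s" and zt_eq: "zt s = w' s - kt s" if "s \<in> {0..T}" for s
    using S(9)[OF that] C(9)[OF that] by (simp_all add: w_def w'_def)
  have cont_e: "continuous_on {0..t} e"
    unfolding e_def using t
    by (intro continuous_intros continuous_on_subset[OF S(1)] continuous_on_subset[OF S(2)]
        continuous_on_subset[OF S(3)] continuous_on_subset[OF C(1)] continuous_on_subset[OF C(2)]
        continuous_on_subset[OF C(3)]) auto
  have "\<bar>w s - w' s\<bar> \<le> \<bar>z 0 - zt 0\<bar> + integral {0..t} e" if s: "s \<in> {0..t}" for s
  proof -
    have sub: "{0..s} \<subseteq> {0..T}" "{0..s} \<subseteq> {0..t}" using s t by auto
    have cont: "continuous_on {0..s} x" "continuous_on {0..s} xt" "continuous_on {0..s} e"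
      using continuous_on_subset[OF S(1) sub(1)] continuous_on_subset[OF C(1) sub(1)]
        continuous_on_subset[OF cont_e sub(2)] .
    have "\<bar>integral {0..s} (\<lambda>r. (1 - h) * x r) - integral {0..s} (\<lambda>r. (1 - h) * xt r)\<bar>
            \<le> 1 * integral {0..s} e"
    proof (rule integral_diff_abs_le)
      fix r assume "r \<in> {0..s}"
      have "\<bar>(1 - h) * x r - (1 - h) * xt r\<bar> = (1 - h) * \<bar>x r - xt r\<bar>"
        using h by (simp add: abs_mult flip: right_diff_distrib)
      also have "\<dots> \<le> 1 * e r" using h unfolding e_def by (intro mult_mono) auto
      finally show "\<bar>(1 - h) * x r - (1 - h) * xt r\<bar> \<le> 1 * e r" .
    qed (intro continuous_on_mult continuous_on_const cont)+
    moreover have "integral {0..s} e \<le> integral {0..t} e"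
    proof (rule integral_subset_le[OF sub(2)])
      show "e integrable_on {0..s}" "e integrable_on {0..t}"
        using cont(3) cont_e by (auto intro: integrable_continuous_real)
    qed (simp add: e_def)
    ultimately show ?thesis unfolding w_def w'_def by linarith
  qed
  then show ?thesis
    using reflected_path_diff_le[OF S(6) C(6) z_eq zt_eq S(5) C(5) t] by blast
qed

lemma error_lt_if_initial_small:
  defines "L \<equiv> \<gamma> + 2 * R / c + 2 * R\<^sup>2 / c\<^sup>2"
  assumes "0 \<le> T" and \<rho>: "0 < \<rho>" "\<rho> \<le> min c 1"
    and small: "(\<bar>x 0 - xt 0\<bar> + \<bar>y 0 - yt 0\<bar> + 2 * \<bar>z 0 - zt 0\<bar>
                  + (sqrt (2 * \<kappa>1) + sqrt (2 * \<kappa>2)) * \<delta>) * exp ((2 * L + 2) * T) < \<rho>"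
  shows "\<forall>t\<in>{0..T}. \<bar>x t - xt t\<bar> + \<bar>y t - yt t\<bar> + \<bar>z t - zt t\<bar> < \<rho>"
proof -
  note S = reflected_solutionD[OF sol] and C = reflected_solutionD[OF control]
  define e where "e t = \<bar>x t - xt t\<bar> + \<bar>y t - yt t\<bar> + \<bar>z t - zt t\<bar>" for t
  have "0 \<le> R" using xt_le[of 0] \<open>0 \<le> T\<close> by auto
  have "0 \<le> \<delta>" using signal_close[of 0] \<open>0 \<le> T\<close> by auto
  have "0 \<le> L" unfolding L_def using \<gamma> c \<open>0 \<le> R\<close> by auto
  have "\<forall>t\<in>{0..T}. e t < \<rho>"
  proof (rule gronwall_bootstrap)
    show "continuous_on {0..T} e" unfolding e_def by (intro continuous_intros S(1-3) C(1-3))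
    fix t assume t: "t \<in> {0..T}" and below: "\<And>s. s \<in> {0..t} \<Longrightarrow> e s \<le> \<rho>"
    have "\<bar>x t - xt t\<bar> \<le> \<bar>x 0 - xt 0\<bar> + L * integral {0..t} e + sqrt (2 * \<kappa>1) * \<delta>"
         "\<bar>y t - yt t\<bar> \<le> \<bar>y 0 - yt 0\<bar> + L * integral {0..t} e + sqrt (2 * \<kappa>2) * \<delta>"
      using xy_error_le[OF t] below \<rho>(2) unfolding e_def L_def by force+
    moreover have "\<bar>z t - zt t\<bar> \<le> 2 * (\<bar>z 0 - zt 0\<bar> + integral {0..t} e)"
      using z_error_le[OF t] unfolding e_def .
    ultimately show "e t \<le> \<bar>x 0 - xt 0\<bar> + \<bar>y 0 - yt 0\<bar> + 2 * \<bar>z 0 - zt 0\<bar>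
        + (sqrt (2 * \<kappa>1) + sqrt (2 * \<kappa>2)) * \<delta> + (2 * L + 2) * integral {0..t} e"
      unfolding e_def by (simp add: algebra_simps)
  qed (use small \<open>0 \<le> L\<close> \<open>0 \<le> \<delta>\<close> \<kappa> in \<open>auto simp: e_def\<close>)
  then show ?thesis by (simp add: e_def)
qed

end

lemma dist_triple_le:
  fixes a b c a' b' c' :: real
  shows "dist (a, b, c) (a', b', c') \<le> \<bar>a - a'\<bar> + \<bar>b - b'\<bar> + \<bar>c - c'\<bar>"
proof -
  have "dist (b, c) (b', c') \<le> \<bar>b - b'\<bar> + \<bar>c - c'\<bar>"
    using sqrt_sum_squares_le_sum_abs[of "b - b'" "c - c'"] by (simp add: dist_Pair_Pair dist_real_def)
  moreover have "dist (a, b, c) (a', b', c') \<le> \<bar>a - a'\<bar> + \<bar>dist (b, c) (b', c')\<bar>"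
    using sqrt_sum_squares_le_sum_abs[of "a - a'" "dist (b, c) (b', c')"]
    by (simp add: dist_Pair_Pair dist_real_def)
  ultimately show ?thesis by simp
qed

lemma abs_diff_le_dist_triple:
  fixes a b c a' b' c' :: real
  shows "\<bar>a - a'\<bar> \<le> dist (a, b, c) (a', b', c')" and "\<bar>b - b'\<bar> \<le> dist (a, b, c) (a', b', c')"
    and "\<bar>c - c'\<bar> \<le> dist (a, b, c) (a', b', c')"
  using dist_fst_le[of "(a, b, c)" "(a', b', c')"] dist_snd_le[of "(a, b, c)" "(a', b', c')"]
    dist_fst_le[of "(b, c)" "(b', c')"] dist_snd_le[of "(b, c)" "(b', c')"]
  by (simp_all add: dist_real_def)

definition increments_close :: "real \<Rightarrow> real \<Rightarrow> (real \<Rightarrow> real) \<Rightarrow> (real \<Rightarrow> real) \<Rightarrow> bool" where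
  "increments_close T \<delta> V U \<longleftrightarrow> (\<forall>t\<in>{0..T}. \<bar>(V t - V 0) - (U t - U 0)\<bar> \<le> \<delta>)"

lemma reflected_solution_bounds:
  assumes "0 \<le> T" and "reflected_solution \<gamma> h \<kappa>1 \<kappa>2 T U1 U2 x y z k"
  obtains c R where "0 < c" and "\<And>t. t \<in> {0..T} \<Longrightarrow> 2 * c \<le> z t"
    and "\<And>t. t \<in> {0..T} \<Longrightarrow> \<bar>x t\<bar> + 1 \<le> R" and "\<And>t. t \<in> {0..T} \<Longrightarrow> \<bar>y t\<bar> + 1 \<le> R"
proof -
  note S = reflected_solutionD[OF assms(2)]
  obtain t0 where "t0 \<in> {0..T}" and min: "\<forall>t\<in>{0..T}. z t0 \<le> z t"
    using continuous_attains_inf[OF compact_Icc _ S(3)] \<open>0 \<le> T\<close> by auto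
  obtain t1 where max: "\<forall>t\<in>{0..T}. \<bar>x t\<bar> + \<bar>y t\<bar> \<le> \<bar>x t1\<bar> + \<bar>y t1\<bar>"
    using continuous_attains_sup[OF compact_Icc _ continuous_on_add[OF continuous_on_rabs[OF S(1)]
        continuous_on_rabs[OF S(2)]]] \<open>0 \<le> T\<close> by auto
  show ?thesis
  proof (rule that[of "z t0 / 2" "\<bar>x t1\<bar> + \<bar>y t1\<bar> + 1"])
    show "0 < z t0 / 2" using S(4)[OF \<open>t0 \<in> {0..T}\<close>] by simp
  qed (use min max in fastforce)+
qed

lemma reflected_solution_stable:
  fixes U1 U2 xt yt zt kt :: "real \<Rightarrow> real"
  assumes "0 \<le> \<gamma>" and "0 \<le> h" and "h \<le> 1" and "0 \<le> \<kappa>1" and "0 \<le> \<kappa>2" and "0 \<le> T"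
    and control: "reflected_solution \<gamma> h \<kappa>1 \<kappa>2 T U1 U2 xt yt zt kt" and "0 < \<epsilon>"
  obtains \<epsilon>' \<delta> where "0 < \<epsilon>'" and "0 < \<delta>"
    and "\<And>V1 V2 x y z k. reflected_solution \<gamma> h \<kappa>1 \<kappa>2 T V1 V2 x y z k \<Longrightarrow>
          (x 0, y 0, z 0) \<in> ball (xt 0, yt 0, zt 0) \<epsilon>' \<Longrightarrow>
          increments_close T \<delta> V1 U1 \<Longrightarrow> increments_close T \<delta> V2 U2 \<Longrightarrow>
          \<forall>t\<in>{0..T}. dist (x t, y t, z t) (xt t, yt t, zt t) \<le> \<epsilon>"
proof -
  obtain c R where "0 < c" and zt_ge: "\<And>t. t \<in> {0..T} \<Longrightarrow> 2 * c \<le> zt t"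
    and R: "\<And>t. t \<in> {0..T} \<Longrightarrow> \<bar>xt t\<bar> + 1 \<le> R" "\<And>t. t \<in> {0..T} \<Longrightarrow> \<bar>yt t\<bar> + 1 \<le> R"
    using reflected_solution_bounds[OF \<open>0 \<le> T\<close> control] by blast
  define L where "L = \<gamma> + 2 * R / c + 2 * R\<^sup>2 / c\<^sup>2"
  define E where "E = exp ((2 * L + 2) * T)"
  define \<rho> where "\<rho> = min \<epsilon> (min c 1)"
  define s where "s = sqrt (2 * \<kappa>1) + sqrt (2 * \<kappa>2)"
  have "0 < E" "0 < \<rho>" "0 \<le> s" using \<open>0 < \<epsilon>\<close> \<open>0 < c\<close> assms(4,5) by (simp_all add: E_def \<rho>_def s_def)
  define \<epsilon>' where "\<epsilon>' = \<rho> / (8 * E)"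
  define S where "S = s + 1"
  have "0 < S" using \<open>0 \<le> s\<close> by (simp add: S_def)
  define \<delta> where "\<delta> = \<rho> / (4 * S * E)"
  show ?thesis
  proof
    show "0 < \<epsilon>'" "0 < \<delta>"
      using \<open>0 < E\<close> \<open>0 < \<rho>\<close> \<open>0 < S\<close> by (simp_all add: \<epsilon>'_def \<delta>_def)
    fix V1 V2 x y z k
    assume sol: "reflected_solution \<gamma> h \<kappa>1 \<kappa>2 T V1 V2 x y z k"
      and near: "(x 0, y 0, z 0) \<in> ball (xt 0, yt 0, zt 0) \<epsilon>'"
      and "increments_close T \<delta> V1 U1" and "increments_close T \<delta> V2 U2"
    then have signal_close: "\<And>t. t \<in> {0..T} \<Longrightarrow>
        \<bar>(V1 t - V1 0) - (U1 t - U1 0)\<bar> \<le> \<delta> \<and> \<bar>(V2 t - V2 0) - (U2 t - U2 0)\<bar> \<le> \<delta>"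
      unfolding increments_close_def by blast
    define d where "d = dist (xt 0, yt 0, zt 0) (x 0, y 0, z 0)"
    have "(\<bar>x 0 - xt 0\<bar> + \<bar>y 0 - yt 0\<bar> + 2 * \<bar>z 0 - zt 0\<bar> + s * \<delta>) * E \<le> (4 * d + s * \<delta>) * E"
      using abs_diff_le_dist_triple[where a = "xt 0" and b = "yt 0" and c = "zt 0"
          and a' = "x 0" and b' = "y 0" and c' = "z 0"] \<open>0 < E\<close>
      unfolding d_def by (intro mult_right_mono) (auto simp: abs_minus_commute)
    also have "\<dots> < (4 * \<epsilon>' + S * \<delta>) * E"
      using near \<open>0 < E\<close> \<open>0 < \<delta>\<close> unfolding d_def S_def mem_ball by (intro mult_strict_right_mono) (auto simp: algebra_simps)
    also have "\<dots> = 4 * \<epsilon>' * E + S * \<delta> * E"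
      by (simp add: algebra_simps)
    also have "\<dots> = \<rho> / 2 + \<rho> / 4"
      using \<open>0 < E\<close> \<open>0 < S\<close> by (simp add: \<epsilon>'_def \<delta>_def)
    finally have small: "(\<bar>x 0 - xt 0\<bar> + \<bar>y 0 - yt 0\<bar> + 2 * \<bar>z 0 - zt 0\<bar> + s * \<delta>) * E < \<rho>"
      using \<open>0 < \<rho>\<close> by linarith
    have "\<rho> \<le> min c 1" "\<rho> \<le> \<epsilon>" by (simp_all add: \<rho>_def min_def)
    have small': "(\<bar>x 0 - xt 0\<bar> + \<bar>y 0 - yt 0\<bar> + 2 * \<bar>z 0 - zt 0\<bar>
                  + (sqrt (2 * \<kappa>1) + sqrt (2 * \<kappa>2)) * \<delta>) * exp ((2 * L + 2) * T) < \<rho>"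
      using small unfolding E_def s_def .
    have err: "\<forall>t\<in>{0..T}. \<bar>x t - xt t\<bar> + \<bar>y t - yt t\<bar> + \<bar>z t - zt t\<bar> < \<rho>"
      by (rule error_lt_if_initial_small[OF assms(1-5) control sol \<open>0 < c\<close> zt_ge R signal_close \<open>0 \<le> T\<close>
            \<open>0 < \<rho>\<close> \<open>\<rho> \<le> min c 1\<close> small'[unfolded L_def]])
    show "\<forall>t\<in>{0..T}. dist (x t, y t, z t) (xt t, yt t, zt t) \<le> \<epsilon>"
    proof
      fix t assume "t \<in> {0..T}"
      then have "\<bar>x t - xt t\<bar> + \<bar>y t - yt t\<bar> + \<bar>z t - zt t\<bar> < \<rho>" using err by blast
      then show "dist (x t, y t, z t) (xt t, yt t, zt t) \<le> \<epsilon>"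
        using dist_triple_le[of "x t" "y t" "z t" "xt t" "yt t" "zt t"] \<open>\<rho> \<le> \<epsilon>\<close> by linarith
    qed
  qed
qed

section \<open>Gaussian and dyadic estimates\<close>

lemma normal_interval_prob_ge:
  fixes X :: "'a \<Rightarrow> real"
  assumes P: "prob_space M" and D: "distributed M lborel X (\<lambda>v. ennreal (normal_density 0 \<sigma> v))"
    and \<sigma>: "0 < \<sigma>" and r: "0 < r"
  shows "2 * r * normal_density 0 \<sigma> (\<bar>a\<bar> + r) \<le> measure M {\<omega>\<in>space M. \<bar>X \<omega> - a\<bar> \<le> r}"
proof -
  interpret prob_space M by (rule P)
  define A where "A = {a - r..a + r}"
  have A: "A \<in> sets lborel" by (simp add: A_def)
  have eqA: "{\<omega>\<in>space M. \<bar>X \<omega> - a\<bar> \<le> r} = X -` A \<inter> space M" by (auto simp: A_def abs_le_iff)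
  have mono: "normal_density 0 \<sigma> (\<bar>a\<bar> + r) \<le> normal_density 0 \<sigma> v" if v: "v \<in> A" for v
  proof -
    have "\<bar>v\<bar> \<le> \<bar>a\<bar> + r" using v by (auto simp: A_def)
    then have "v\<^sup>2 \<le> (\<bar>a\<bar> + r)\<^sup>2" using power_mono[of "\<bar>v\<bar>" "\<bar>a\<bar> + r" 2] by simp
    then have "- ((\<bar>a\<bar> + r) - 0)\<^sup>2 / (2 * \<sigma>\<^sup>2) \<le> - (v - 0)\<^sup>2 / (2 * \<sigma>\<^sup>2)"
      using \<sigma> by (simp add: divide_right_mono)
    then show ?thesis unfolding normal_density_def using \<sigma>
      by (intro mult_left_mono) auto
  qed
  have "emeasure M (X -` A \<inter> space M) = (\<integral>\<^sup>+v. ennreal (normal_density 0 \<sigma> v) * indicator A v \<partial>lborel)"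
    by (rule distributed_emeasure[OF D A])
  also have "\<dots> \<ge> (\<integral>\<^sup>+v. ennreal (normal_density 0 \<sigma> (\<bar>a\<bar> + r)) * indicator A v \<partial>lborel)"
    by (intro nn_integral_mono) (auto simp: indicator_def intro: mono)
  moreover have "(\<integral>\<^sup>+v. ennreal (normal_density 0 \<sigma> (\<bar>a\<bar> + r)) * indicator A v \<partial>lborel)
      = ennreal (normal_density 0 \<sigma> (\<bar>a\<bar> + r)) * ennreal (2 * r)"
    using A r by (simp add: nn_integral_cmult_indicator A_def)
  ultimately have "ennreal (normal_density 0 \<sigma> (\<bar>a\<bar> + r) * (2 * r)) \<le> emeasure M (X -` A \<inter> space M)"
    using r by (simp add: ennreal_mult)
  then have "normal_density 0 \<sigma> (\<bar>a\<bar> + r) * (2 * r) \<le> measure M (X -` A \<inter> space M)"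
    by (simp add: emeasure_eq_measure ennreal_le_iff)
  then show ?thesis unfolding eqA by (simp add: ac_simps)
qed

lemma normal_tail_prob_le:
  fixes X :: "'a \<Rightarrow> real"
  assumes P: "prob_space M" and D: "distributed M lborel X (\<lambda>v. ennreal (normal_density 0 \<sigma> v))"
    and \<sigma>: "0 < \<sigma>" and a: "0 < a"
  shows "measure M {\<omega>\<in>space M. a < \<bar>X \<omega>\<bar>} \<le> 3 * \<sigma> ^ 4 / a ^ 4"
proof -
  interpret prob_space M by (rule P)
  define B where "B = {..< -a} \<union> {a<..}"
  have B: "B \<in> sets lborel" by (simp add: B_def)
  have eqB: "{\<omega>\<in>space M. a < \<bar>X \<omega>\<bar>} = X -` B \<inter> space M" by (auto simp: B_def)
  have ind: "indicator B v \<le> ennreal (v ^ 4 / a ^ 4)" for v :: real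
  proof (cases "v \<in> B")
    case True
    then have "a \<le> \<bar>v\<bar>" by (auto simp: B_def)
    then have "a ^ 4 \<le> \<bar>v\<bar> ^ 4" using a by (intro power_mono) auto
    moreover have "\<bar>v\<bar> ^ 4 = v ^ 4" by (simp add: power_even_abs)
    ultimately have "a ^ 4 \<le> v ^ 4" by simp
    then have "1 \<le> v ^ 4 / a ^ 4" using a by (simp add: field_simps)
    then show ?thesis using True by (simp add: indicator_def)
  next
    case False then show ?thesis by (simp add: indicator_def)
  qed
  have mom: "has_bochner_integral lborel (\<lambda>x. normal_density 0 \<sigma> x * (x - 0) ^ (2 * 2)) (fact (2 * 2) / ((2 / \<sigma>\<^sup>2) ^ 2 * fact 2))"
    using normal_moment_even[of \<sigma> 0 2] \<sigma> by simp
  have "fact (2 * 2) / ((2 / \<sigma>\<^sup>2) ^ 2 * fact 2) = (3 * \<sigma> ^ 4 :: real)"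
    using \<sigma> by (simp add: fact_numeral field_simps power2_eq_square numeral_eq_Suc)
  with mom have mom': "has_bochner_integral lborel (\<lambda>x. normal_density 0 \<sigma> x * x ^ 4) (3 * \<sigma> ^ 4)" using \<sigma> by simp
  have nn: "(\<integral>\<^sup>+x. ennreal (normal_density 0 \<sigma> x * x ^ 4) \<partial>lborel) = ennreal (3 * \<sigma> ^ 4)"
  proof -
    have "integrable lborel (\<lambda>x. normal_density 0 \<sigma> x * x ^ 4)" and "integral\<^sup>L lborel (\<lambda>x. normal_density 0 \<sigma> x * x ^ 4) = 3 * \<sigma> ^ 4"
      using mom' by (simp_all add: has_bochner_integral_iff)
    then show ?thesis using nn_integral_eq_integral[of lborel "\<lambda>x. normal_density 0 \<sigma> x * x ^ 4"]
      by (simp add: zero_le_even_power)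
  qed
  have "emeasure M (X -` B \<inter> space M) = (\<integral>\<^sup>+v. ennreal (normal_density 0 \<sigma> v) * indicator B v \<partial>lborel)"
    by (rule distributed_emeasure[OF D B])
  also have "\<dots> \<le> (\<integral>\<^sup>+v. ennreal (normal_density 0 \<sigma> v) * ennreal (v ^ 4 / a ^ 4) \<partial>lborel)"
    by (intro nn_integral_mono mult_left_mono ind) auto
  also have "\<dots> = (\<integral>\<^sup>+v. ennreal (1 / a ^ 4) * ennreal (normal_density 0 \<sigma> v * v ^ 4) \<partial>lborel)"
    by (intro nn_integral_cong) (auto simp: ennreal_mult[symmetric] zero_le_even_power)
  also have "\<dots> = ennreal (1 / a ^ 4) * ennreal (3 * \<sigma> ^ 4)"
    by (simp add: nn_integral_cmult nn)
  also have "\<dots> = ennreal (3 * \<sigma> ^ 4 / a ^ 4)"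
    using a \<sigma> by (simp add: ennreal_mult[symmetric])
  finally have "measure M (X -` B \<inter> space M) \<le> 3 * \<sigma> ^ 4 / a ^ 4"
    using a \<sigma> by (simp add: emeasure_eq_measure ennreal_le_iff)
  then show ?thesis unfolding eqB .
qed

lemma normal_density_ge:
  fixes \<tau> T v Lu :: real
  assumes \<tau>: "0 < \<tau>" "\<tau> \<le> T" and v: "0 \<le> v" "v \<le> (Lu + 1) * \<tau>" and Lu: "0 \<le> Lu"
  shows "exp (- ((Lu + 1)\<^sup>2 * T / 2)) / sqrt (2 * pi * T) \<le> normal_density 0 (sqrt \<tau>) v"
proof -
  have nd: "normal_density 0 (sqrt \<tau>) v = 1 / sqrt (2 * pi * \<tau>) * exp (- v\<^sup>2 / (2 * \<tau>))"
    using \<tau> by (simp add: normal_density_def)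
  have e: "- ((Lu + 1)\<^sup>2 * T / 2) \<le> - v\<^sup>2 / (2 * \<tau>)"
  proof -
    have "v\<^sup>2 \<le> ((Lu + 1) * \<tau>)\<^sup>2" using v by (intro power_mono) auto
    then have "v\<^sup>2 / (2 * \<tau>) \<le> ((Lu + 1) * \<tau>)\<^sup>2 / (2 * \<tau>)" using \<tau> by (intro divide_right_mono) auto
    also have "\<dots> = (Lu + 1)\<^sup>2 * \<tau> / 2" using \<tau> by (simp add: power2_eq_square field_simps)
    also have "\<dots> \<le> (Lu + 1)\<^sup>2 * T / 2" using \<tau> by (intro divide_right_mono mult_left_mono) auto
    finally show ?thesis by simp
  qed
  have s: "1 / sqrt (2 * pi * T) \<le> 1 / sqrt (2 * pi * \<tau>)"
    using \<tau> by (intro divide_left_mono) (auto intro: real_sqrt_le_mono mult_pos_pos)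
  have "exp (- ((Lu + 1)\<^sup>2 * T / 2)) / sqrt (2 * pi * T) = 1 / sqrt (2 * pi * T) * exp (- ((Lu + 1)\<^sup>2 * T / 2))"
    by simp
  also have "\<dots> \<le> 1 / sqrt (2 * pi * \<tau>) * exp (- v\<^sup>2 / (2 * \<tau>))"
    using s e \<tau> by (intro mult_mono) auto
  finally show ?thesis using nd by simp
qed

lemma dyadic_chaining_bound:
  fixes f :: "real \<Rightarrow> real" and a :: "nat \<Rightarrow> real"
  assumes "\<And>l i. l \<le> m \<Longrightarrow> i < 2 ^ l \<Longrightarrow>
             \<bar>f (p + real (Suc i) * h / 2 ^ l) - f (p + real i * h / 2 ^ l)\<bar> \<le> a l"
    and "k \<le> 2 ^ m"
  shows "\<bar>f (p + real k * h / 2 ^ m) - f p\<bar> \<le> (\<Sum>l\<le>m. a l)"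
  using assms
proof (induction m arbitrary: k)
  case 0
  have a0: "0 \<le> a 0" using order_trans[OF abs_ge_zero "0.prems"(1)[of 0 0]] by simp
  show ?case
  proof (cases "k = 0")
    case True then show ?thesis using a0 by simp
  next
    case False
    then have "k = 1" using "0.prems"(2) by simp
    then show ?thesis using "0.prems"(1)[of 0 0] by simp
  qed
next
  case (Suc m)
  have IH: "\<bar>f (p + real k' * h / 2 ^ m) - f p\<bar> \<le> (\<Sum>l\<le>m. a l)" if "k' \<le> 2 ^ m" for k'
    using Suc.IH[OF _ that] Suc.prems(1) by simp
  have aS: "0 \<le> a (Suc m)" using order_trans[OF abs_ge_zero Suc.prems(1)[of "Suc m" 0]] by simp
  define k' where "k' = k div 2"
  have pw: "(2::real) ^ Suc m = 2 * 2 ^ m" by simp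
  show ?case
  proof (cases "even k")
    case True
    then have kk: "k = 2 * k'" unfolding k'_def by simp
    have k'b: "k' \<le> 2 ^ m" using Suc.prems(2) kk by simp
    have pt: "p + real k * h / 2 ^ Suc m = p + real k' * h / 2 ^ m"
      unfolding kk pw by (simp add: field_simps)
    show ?thesis unfolding pt using IH[OF k'b] aS by simp
  next
    case False
    then have kk: "k = Suc (2 * k')" unfolding k'_def by presburger
    have k'b: "k' \<le> 2 ^ m" and k'l: "2 * k' < 2 ^ Suc m" using Suc.prems(2) kk by auto
    have pt0: "p + real (2 * k') * h / 2 ^ Suc m = p + real k' * h / 2 ^ m"
      unfolding pw by (simp add: field_simps)
    have st: "\<bar>f (p + real k * h / 2 ^ Suc m) - f (p + real (2 * k') * h / 2 ^ Suc m)\<bar> \<le> a (Suc m)"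
      using Suc.prems(1)[OF order.refl k'l] unfolding kk .
    have "\<bar>f (p + real k * h / 2 ^ Suc m) - f p\<bar>
       \<le> \<bar>f (p + real k * h / 2 ^ Suc m) - f (p + real (2 * k') * h / 2 ^ Suc m)\<bar>
         + \<bar>f (p + real k' * h / 2 ^ m) - f p\<bar>" unfolding pt0 by linarith
    also have "\<dots> \<le> a (Suc m) + (\<Sum>l\<le>m. a l)" using st IH[OF k'b] by linarith
    finally show ?thesis by simp
  qed
qed

lemma continuous_le_if_le_on_dyadics:
  fixes f :: "real \<Rightarrow> real"
  assumes h: "0 < h" and cf: "continuous_on {p..p + h} f"
    and B: "\<And>m k. k \<le> 2 ^ m \<Longrightarrow> f (p + real k * h / 2 ^ m) \<le> C"
    and s: "s \<in> {p..p + h}"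
  shows "f s \<le> C"
proof -
  define k where "k m = nat \<lfloor>(s - p) * 2 ^ m / h\<rfloor>" for m :: nat
  define u where "u m = p + real (k m) * h / 2 ^ m" for m :: nat
  have fl: "real (k m) = of_int \<lfloor>(s - p) * 2 ^ m / h\<rfloor>" for m
    unfolding k_def using s h by (simp add: zero_le_floor zero_le_divide_iff)
  have kb: "k m \<le> 2 ^ m" for m
  proof -
    have "(s - p) / h \<le> 1" using s h by simp
    then have "((s - p) / h) * 2 ^ m \<le> 1 * 2 ^ m" by (intro mult_right_mono) auto
    then have "(s - p) * 2 ^ m / h \<le> 2 ^ m" by simp
    then have "real (k m) \<le> 2 ^ m" unfolding fl by linarith
    then show ?thesis by (simp add: of_nat_le_iff[symmetric])
  qed
  have ub: "\<bar>u m - s\<bar> \<le> h / 2 ^ m" for m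
  proof -
    define X where "X = (s - p) * 2 ^ m / h"
    define F where "F = real (k m)"
    have F1: "F \<le> X" "X < F + 1" unfolding F_def fl X_def by linarith+
    have XE: "X * h / 2 ^ m = s - p" unfolding X_def using h by simp
    have "F * h / 2 ^ m \<le> X * h / 2 ^ m" using F1 h by (intro divide_right_mono mult_right_mono) auto
    moreover have "X * h / 2 ^ m \<le> (F + 1) * h / 2 ^ m" using F1 h by (intro divide_right_mono mult_right_mono) auto
    moreover have "(F + 1) * h / 2 ^ m = F * h / 2 ^ m + h / 2 ^ m" by (simp add: field_simps)
    ultimately show ?thesis unfolding u_def F_def[symmetric] XE by linarith
  qed
  have lim0: "(\<lambda>m. h / 2 ^ m) \<longlonglongrightarrow> 0"
    by (intro tendsto_divide_0[OF tendsto_const]) (simp add: filterlim_realpow_sequentially_gt1)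
  have ulim: "u \<longlonglongrightarrow> s"
  proof -
    have "(\<lambda>m. u m - s) \<longlonglongrightarrow> 0"
      by (rule Lim_null_comparison[OF _ lim0]) (use ub in \<open>auto simp: real_norm_def\<close>)
    then show ?thesis by (simp add: LIM_zero_iff)
  qed
  have uin: "u m \<in> {p..p + h}" for m
  proof -
    have "0 \<le> real (k m) * h / 2 ^ m" using h by simp
    moreover have "real (k m) * h / 2 ^ m \<le> h"
    proof -
      have "real (k m) \<le> 2 ^ m" using kb[of m] by (simp add: of_nat_le_iff[symmetric])
      then have "real (k m) * h \<le> 2 ^ m * h" using h by (intro mult_right_mono) auto
      then show ?thesis by (simp add: field_simps)
    qed
    ultimately show ?thesis unfolding u_def by auto
  qed
  have "(\<lambda>m. f (u m)) \<longlonglongrightarrow> f s"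
    using continuous_on_tendsto_compose[OF cf ulim s] uin by (simp add: o_def)
  moreover have "\<forall>m. f (u m) \<le> C" using B kb unfolding u_def by blast
  ultimately show ?thesis by (intro LIMSEQ_le_const2) auto
qed

lemma dyadic_point_eq:
  fixes \<tau> :: real
  assumes "l \<le> m"
  shows "real (j * 2 ^ m + i * 2 ^ (m - l)) * (\<tau> / 2 ^ m) = real j * \<tau> + real i * \<tau> / 2 ^ l"
proof -
  have p: "(2::real) ^ m = 2 ^ (m - l) * 2 ^ l" using assms by (simp add: power_add[symmetric])
  show ?thesis by (simp add: p field_simps)
qed

lemma disjoint_family_on_dyadic_blocks:
  fixes m :: nat and S :: "('b \<times> nat) set"
  shows "disjoint_family_on (\<lambda>g. {fst g} \<times> {snd g * 2 ^ m..<Suc (snd g) * 2 ^ m}) S"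
  unfolding disjoint_family_on_def
proof (intro ballI impI)
  fix g g' :: "'b \<times> nat" assume "g \<noteq> g'"
  show "{fst g} \<times> {snd g * 2 ^ m..<Suc (snd g) * 2 ^ m} \<inter> {fst g'} \<times> {snd g' * 2 ^ m..<Suc (snd g') * 2 ^ m} = {}"
  proof (rule ccontr)
    assume "\<not> ?thesis"
    then obtain k where k: "fst g = fst g'" "snd g * 2 ^ m \<le> k" "k < Suc (snd g) * 2 ^ m"
      "snd g' * 2 ^ m \<le> k" "k < Suc (snd g') * 2 ^ m" by auto
    have "k div 2 ^ m = snd g" using k(2,3) by (intro div_nat_eqI) (auto simp: ac_simps)
    moreover have "k div 2 ^ m = snd g'" using k(4,5) by (intro div_nat_eqI) (auto simp: ac_simps)
    ultimately have "g = g'" using k(1) by (simp add: prod_eq_iff)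
    with \<open>g \<noteq> g'\<close> show False by simp
  qed
qed

text \<open>Weights for the chaining argument: they sum to at most \<open>\<eta>\<close>, yet decay slowly enough that
  the fourth-moment bounds \<open>2\<^sup>l \<cdot> 3 (\<tau> / 2\<^sup>l)\<^sup>2 / a\<^sub>l\<^sup>4\<close> decay geometrically, with ratio
  \<open>10\<^sup>4 / (2 \<cdot> 9\<^sup>4) = 5000 / 6561\<close>.\<close>
definition dyadic_weight :: "real \<Rightarrow> nat \<Rightarrow> real" where
  "dyadic_weight \<eta> l = \<eta> / 10 * (9 / 10) ^ l"

lemma sum_dyadic_weight_le:
  assumes "0 \<le> \<eta>"
  shows "(\<Sum>l\<le>m. dyadic_weight \<eta> l) \<le> \<eta>"
proof -
  have "(\<Sum>l\<le>m. (9 / 10 :: real) ^ l) = ((9 / 10) ^ Suc m - 1) / (9 / 10 - 1)"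
    by (simp add: lessThan_Suc_atMost[symmetric] geometric_sum)
  also have "\<dots> \<le> 10" by (simp add: field_simps)
  finally have "\<eta> / 10 * (\<Sum>l\<le>m. (9 / 10 :: real) ^ l) \<le> \<eta> / 10 * 10"
    using assms by (intro mult_left_mono) auto
  then show ?thesis by (simp add: dyadic_weight_def sum_distrib_left)
qed

lemma dyadic_tail_sum_le:
  fixes \<tau> \<eta> :: real
  assumes "0 < \<eta>"
  shows "(\<Sum>l\<le>m. 2 ^ l * (3 * (\<tau> / 2 ^ l)\<^sup>2 / dyadic_weight \<eta> l ^ 4)) \<le> 150000 * \<tau>\<^sup>2 / \<eta> ^ 4"
proof -
  have summand: "2 ^ l * (3 * (\<tau> / 2 ^ l)\<^sup>2 / dyadic_weight \<eta> l ^ 4)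
      = 30000 * \<tau>\<^sup>2 / \<eta> ^ 4 * (5000 / 6561) ^ l" for l
  proof -
    have "2 ^ l * ((9 / 10) ^ l) ^ 4 = 2 ^ l * ((9 / 10) ^ 4 :: real) ^ l"
      by (metis power_mult mult.commute)
    also have "\<dots> = (2 * (9 / 10) ^ 4) ^ l"
      by (rule power_mult_distrib[symmetric])
    also have "(2 * (9 / 10) ^ 4 :: real) = 6561 / 5000"
      by (simp add: power_divide)
    finally have "(5000 / 6561 :: real) ^ l = 1 / (2 ^ l * ((9 / 10) ^ l) ^ 4)"
      by (simp add: power_divide)
    then show ?thesis
      using assms by (simp add: dyadic_weight_def field_simps power2_eq_square power_mult_distrib)
  qed
  have "(\<Sum>l\<le>m. (5000 / 6561 :: real) ^ l) = (\<Sum>l<Suc m. (5000 / 6561) ^ l)"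
    by (simp add: lessThan_Suc_atMost)
  also have "\<dots> = 6561 / 1561 * (1 - (5000 / 6561) ^ Suc m)"
    by (subst geometric_sum) (simp_all add: field_simps)
  also have "\<dots> \<le> 6561 / 1561" by simp
  also have "\<dots> \<le> 5" by simp
  finally have geometric: "(\<Sum>l\<le>m. (5000 / 6561 :: real) ^ l) \<le> 5" .
  have "(\<Sum>l\<le>m. 2 ^ l * (3 * (\<tau> / 2 ^ l)\<^sup>2 / dyadic_weight \<eta> l ^ 4))
      = 30000 * \<tau>\<^sup>2 / \<eta> ^ 4 * (\<Sum>l\<le>m. (5000 / 6561) ^ l)"
    by (simp only: summand sum_distrib_left)
  also have "\<dots> \<le> 30000 * \<tau>\<^sup>2 / \<eta> ^ 4 * 5"
    using geometric assms by (intro mult_left_mono) auto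
  finally show ?thesis by simp
qed

lemma grid_cell_exists:
  fixes \<tau> t :: real
  assumes "0 < \<tau>" and "0 < N" and "t \<in> {0..real N * \<tau>}"
  obtains j where "j < N" and "real j * \<tau> \<le> t" and "t \<le> real (Suc j) * \<tau>"
proof
  define j where "j = min (nat \<lfloor>t / \<tau>\<rfloor>) (N - 1)"
  show "j < N" using \<open>0 < N\<close> by (simp add: j_def)
  have "real j \<le> real (nat \<lfloor>t / \<tau>\<rfloor>)" by (simp add: j_def)
  also have "\<dots> \<le> t / \<tau>" using assms by simp
  finally show "real j * \<tau> \<le> t" using assms by (simp add: field_simps)
  have "t / \<tau> \<le> real (Suc j)"
  proof (cases "nat \<lfloor>t / \<tau>\<rfloor> \<le> N - 1")
    case True
    then show ?thesis using assms by (simp add: j_def) linarith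
  next
    case False
    then show ?thesis using assms by (simp add: j_def field_simps)
  qed
  then show "t \<le> real (Suc j) * \<tau>" using assms by (simp add: field_simps)
qed

lemma telescoping_deviation_le:
  fixes f g :: "nat \<Rightarrow> real"
  assumes "f 0 = g 0" and "\<And>i. i < j \<Longrightarrow> \<bar>(f (Suc i) - f i) - (g (Suc i) - g i)\<bar> \<le> r"
  shows "\<bar>f j - g j\<bar> \<le> real j * r"
  using assms(2)
proof (induction j)
  case (Suc j)
  then have "\<bar>f j - g j\<bar> \<le> real j * r" and "\<bar>(f (Suc j) - f j) - (g (Suc j) - g j)\<bar> \<le> r"
    by simp_all
  then show ?case by (simp add: algebra_simps)
qed (use assms(1) in simp)

lemma borel_measurable_PiM_sum_components:
  assumes "{b} \<times> R \<subseteq> K"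
  shows "(\<lambda>f. \<Sum>k\<in>R. f (b, k)) \<in> borel_measurable (PiM K (\<lambda>_. borel :: real measure))"
proof (rule borel_measurable_sum)
  fix k assume "k \<in> R"
  then show "(\<lambda>f. f (b, k)) \<in> borel_measurable (PiM K (\<lambda>_. borel))"
    using assms by (intro measurable_component_singleton) auto
qed

lemma (in prob_space) prob_INT_restrict_eq_prod:
  fixes X :: "'i \<Rightarrow> 'a \<Rightarrow> real" and K :: "'j \<Rightarrow> 'i set"
  assumes indep: "indep_vars (\<lambda>_. borel) X I" and "finite J" and "J \<noteq> {}"
    and "disjoint_family_on K J" and "\<And>g. g \<in> J \<Longrightarrow> K g \<subseteq> I"
    and sets: "\<And>g. g \<in> J \<Longrightarrow> {f \<in> space (PiM (K g) (\<lambda>_. borel)). P g f} \<in> sets (PiM (K g) (\<lambda>_. borel))"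
  shows "prob (\<Inter>g\<in>J. {\<omega> \<in> space M. P g (restrict (\<lambda>i. X i \<omega>) (K g))})
       = (\<Prod>g\<in>J. prob {\<omega> \<in> space M. P g (restrict (\<lambda>i. X i \<omega>) (K g))})"
proof -
  define Y where "Y g \<omega> = restrict (\<lambda>i. X i \<omega>) (K g)" for g \<omega>
  have "indep_vars (\<lambda>g. PiM (K g) (\<lambda>_. borel)) Y J"
    unfolding Y_def by (rule indep_vars_restrict[OF indep]) (use assms in auto)
  moreover have "Y g -` {f \<in> space (PiM (K g) (\<lambda>_. borel)). P g f} \<inter> space M
      = {\<omega> \<in> space M. P g (restrict (\<lambda>i. X i \<omega>) (K g))}" for g
    by (auto simp: Y_def space_PiM)
  ultimately show ?thesis
    using indep_varsD[of _ Y J J "\<lambda>g. {f \<in> space (PiM (K g) (\<lambda>_. borel)). P g f}"] assms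
    by simp
qed

lemma C1_differentiable_imp_lipschitz_on:
  fixes f :: "real \<Rightarrow> real"
  assumes "f C1_differentiable_on UNIV"
  shows "\<exists>L\<ge>0. \<forall>s\<in>{0..T}. \<forall>t\<in>{0..T}. \<bar>f t - f s\<bar> \<le> L * \<bar>t - s\<bar>"
proof -
  obtain D where d: "\<And>x. (f has_real_derivative D x) (at x)" and cD: "continuous_on UNIV D"
    using assms unfolding C1_differentiable_on_def has_real_derivative_iff_has_vector_derivative by blast
  have "compact (D ` {0..T})" by (intro compact_continuous_image continuous_on_subset[OF cD]) auto
  then obtain B where B: "B > 0" "\<forall>y\<in>D ` {0..T}. norm y \<le> B" using compact_imp_bounded bounded_pos by metis
  have mv: "\<bar>f b - f a\<bar> \<le> B * (b - a)" if ab: "a \<in> {0..T}" "b \<in> {0..T}" "a < b" for a b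
  proof -
    obtain z where z: "a < z" "z < b" "f b - f a = (b - a) * D z"
      using MVT2[OF ab(3), of f D] d by blast
    have "z \<in> {0..T}" using z ab by auto
    then have "\<bar>D z\<bar> \<le> B" using B by auto
    then have "\<bar>(b - a) * D z\<bar> \<le> (b - a) * B" using ab(3) by (simp add: abs_mult mult_left_mono)
    then show ?thesis using z(3) by (simp add: mult.commute)
  qed
  show ?thesis
  proof (intro exI[of _ B] conjI ballI)
    show "0 \<le> B" using B by simp
    fix s t assume s: "s \<in> {0..T}" and t: "t \<in> {0..T}"
    consider "s < t" | "s = t" | "t < s" by linarith
    then show "\<bar>f t - f s\<bar> \<le> B * \<bar>t - s\<bar>"
    proof cases
      case 1 then show ?thesis using mv[OF s t] by simp
    next
      case 2 then show ?thesis using B by simp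
    next
      case 3 then show ?thesis using mv[OF t s] by (simp add: abs_minus_commute)
    qed
  qed
qed

section \<open>Brownian motion near a Lipschitz control\<close>

locale brownian_pair =
  fixes M :: "'a measure" and W1 W2 :: "real \<Rightarrow> 'a \<Rightarrow> real"
  assumes BM: "std_BM2 M W1 W2"
begin

sublocale prob_space M
  using BM unfolding std_BM2_def by blast

text \<open>Both coordinates are indexed by a Boolean, and time is clamped at \<open>0\<close> so that every
  \<open>W b t\<close> is a random variable and every path is continuous on all of \<open>\<real>\<close>.\<close>
definition W :: "bool \<Rightarrow> real \<Rightarrow> 'a \<Rightarrow> real" where
  "W b t = (if b then W1 else W2) (max 0 t)"

lemma W_eq: "0 \<le> t \<Longrightarrow> W b t = (if b then W1 else W2) t"
  by (simp add: W_def)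

lemma W_measurable[measurable]: "W b t \<in> borel_measurable M"
proof -
  have "\<forall>t\<ge>0. W1 t \<in> borel_measurable M \<and> W2 t \<in> borel_measurable M"
    using BM unfolding std_BM2_def by blast
  then show ?thesis unfolding W_def by simp
qed

lemma W_0: "\<omega> \<in> space M \<Longrightarrow> W b 0 \<omega> = 0"
  using BM unfolding std_BM2_def W_def by auto

lemma continuous_on_W:
  assumes "\<omega> \<in> space M"
  shows "continuous_on S (\<lambda>t. W b t \<omega>)"
proof -
  have c: "continuous_on {0..} (\<lambda>t. (if b then W1 else W2) t \<omega>)"
    using BM assms unfolding std_BM2_def by (cases b) auto
  have "continuous_on UNIV (\<lambda>t. (if b then W1 else W2) (max 0 t) \<omega>)"
    by (rule continuous_on_compose2[OF c, of UNIV "\<lambda>t. max 0 t"]) (auto intro!: continuous_intros)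
  then show ?thesis unfolding W_def by (rule continuous_on_subset) auto
qed

lemma distributed_W_increment:
  assumes "0 \<le> s" "s < t"
  shows "distributed M lborel (\<lambda>\<omega>. W b t \<omega> - W b s \<omega>) (\<lambda>v. ennreal (normal_density 0 (sqrt (t - s)) v))"
proof -
  define \<tau> :: "nat \<Rightarrow> real" where "\<tau> i = (if i = 0 then s else t)" for i
  have "0 \<le> \<tau> 0 \<and> (\<forall>i<1. \<tau> i < \<tau> (Suc i))" using assms by (simp add: \<tau>_def)
  then have "\<forall>i<1. distributed M lborel (\<lambda>\<omega>. W1 (\<tau> (Suc i)) \<omega> - W1 (\<tau> i) \<omega>)
                   (\<lambda>v. ennreal (normal_density 0 (sqrt (\<tau> (Suc i) - \<tau> i)) v)) \<and>
               distributed M lborel (\<lambda>\<omega>. W2 (\<tau> (Suc i)) \<omega> - W2 (\<tau> i) \<omega>)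
                   (\<lambda>v. ennreal (normal_density 0 (sqrt (\<tau> (Suc i) - \<tau> i)) v))"
    using BM unfolding std_BM2_def by blast
  then have "distributed M lborel (\<lambda>\<omega>. W1 t \<omega> - W1 s \<omega>) (\<lambda>v. ennreal (normal_density 0 (sqrt (t - s)) v)) \<and>
     distributed M lborel (\<lambda>\<omega>. W2 t \<omega> - W2 s \<omega>) (\<lambda>v. ennreal (normal_density 0 (sqrt (t - s)) v))"
    by (simp add: \<tau>_def)
  moreover have "W b t = (if b then W1 else W2) t" "W b s = (if b then W1 else W2) s"
    using assms by (simp_all add: W_eq)
  ultimately show ?thesis by (cases b) auto
qed

lemma indep_vars_W_increments:
  assumes "0 \<le> \<tau> 0" "\<forall>i<n. \<tau> i < \<tau> (Suc i)"
  shows "indep_vars (\<lambda>_. borel) (\<lambda>(b, i) \<omega>. W b (\<tau> (Suc i)) \<omega> - W b (\<tau> i) \<omega>) (UNIV \<times> {..<n})"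
proof -
  have nn: "0 \<le> \<tau> i" if "i \<le> n" for i
    using that
  proof (induction i)
    case 0 then show ?case using assms by simp
  next
    case (Suc i) then show ?case using assms(2) by (metis Suc_le_lessD less_imp_le order_trans order_less_imp_le)
  qed
  have I: "indep_vars (\<lambda>_. borel)
          (\<lambda>(b, i) \<omega>. (if b then W1 else W2) (\<tau> (Suc i)) \<omega> - (if b then W1 else W2) (\<tau> i) \<omega>)
          (UNIV \<times> {..<n})"
    using BM assms unfolding std_BM2_def by blast
  show ?thesis
  proof (rule iffD1[OF indep_vars_cong I])
    fix bi :: "bool \<times> nat" assume bi: "bi \<in> UNIV \<times> {..<n}"
    then obtain b i where bi': "bi = (b, i)" "i < n" by auto
    have "0 \<le> \<tau> i" "0 \<le> \<tau> (Suc i)" using nn bi' by auto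
    then show "(case bi of (b, i) \<Rightarrow> \<lambda>\<omega>. (if b then W1 else W2) (\<tau> (Suc i)) \<omega> - (if b then W1 else W2) (\<tau> i) \<omega>) =
          (case bi of (b, i) \<Rightarrow> \<lambda>\<omega>. W b (\<tau> (Suc i)) \<omega> - W b (\<tau> i) \<omega>)"
      unfolding bi' by (simp add: W_eq)
  qed auto
qed

definition increment_near :: "bool \<Rightarrow> (real \<Rightarrow> real) \<Rightarrow> real \<Rightarrow> real \<Rightarrow> nat \<Rightarrow> 'a set" where
  "increment_near b u \<tau> r j = {\<omega>\<in>space M. \<bar>W b (real (Suc j) * \<tau>) \<omega> - W b (real j * \<tau>) \<omega>
       - (u (real (Suc j) * \<tau>) - u (real j * \<tau>))\<bar> \<le> r}"

definition dyadic_increments_le :: "bool \<Rightarrow> (nat \<Rightarrow> real) \<Rightarrow> real \<Rightarrow> nat \<Rightarrow> nat \<Rightarrow> 'a set" where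
  "dyadic_increments_le b a \<tau> j m = {\<omega>\<in>space M. \<forall>l\<in>{..m}. \<forall>i\<in>{..<2^l}.
      \<bar>W b (real j * \<tau> + real (Suc i) * \<tau> / 2 ^ l) \<omega> - W b (real j * \<tau> + real i * \<tau> / 2 ^ l) \<omega>\<bar> \<le> a l}"

lemma sets_increment_near[measurable]: "increment_near b u \<tau> r j \<in> sets M"
  unfolding increment_near_def by measurable

lemma sets_dyadic_increments_le[measurable]: "dyadic_increments_le b a \<tau> j m \<in> sets M"
  unfolding dyadic_increments_le_def by measurable

lemma prob_increment_near_ge:
  assumes \<tau>: "0 < \<tau>" and r: "0 < r"
  shows "2 * r * normal_density 0 (sqrt \<tau>) (\<bar>u (real (Suc j) * \<tau>) - u (real j * \<tau>)\<bar> + r) \<le> prob (increment_near b u \<tau> r j)"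
proof -
  have d: "real (Suc j) * \<tau> - real j * \<tau> = \<tau>" by (simp add: algebra_simps)
  have D: "distributed M lborel (\<lambda>\<omega>. W b (real (Suc j) * \<tau>) \<omega> - W b (real j * \<tau>) \<omega>)
      (\<lambda>v. ennreal (normal_density 0 (sqrt \<tau>) v))"
    using distributed_W_increment[of "real j * \<tau>" "real (Suc j) * \<tau>" b] \<tau> unfolding d by (simp add: algebra_simps)
  show ?thesis unfolding increment_near_def
    by (rule normal_interval_prob_ge[OF prob_space_axioms D]) (use \<tau> r in auto)
qed

lemma prob_dyadic_increments_exceed_le:
  assumes \<tau>: "0 < \<tau>" and a: "\<And>l. 0 < a l"
  shows "prob (space M - dyadic_increments_le b a \<tau> j m) \<le> (\<Sum>l\<le>m. 2 ^ l * (3 * (\<tau> / 2 ^ l)\<^sup>2 / (a l) ^ 4))"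
proof -
  define I where "I = Sigma {..m} (\<lambda>l. {..<(2::nat)^l})"
  define s where "s l i = real j * \<tau> + real i * \<tau> / 2 ^ l" for l i :: nat
  define s' where "s' l i = real j * \<tau> + real (Suc i) * \<tau> / 2 ^ l" for l i :: nat
  define F where "F li = {\<omega>\<in>space M. a (fst li) < \<bar>W b (s' (fst li) (snd li)) \<omega> - W b (s (fst li) (snd li)) \<omega>\<bar>}" for li
  have fin: "finite I" unfolding I_def by auto
  have Fs: "F ` I \<subseteq> events" unfolding F_def by auto
  have eq: "space M - dyadic_increments_le b a \<tau> j m = (\<Union>li\<in>I. F li)"
    unfolding dyadic_increments_le_def F_def I_def s_def s'_def by (auto simp: not_le) (metis atMost_iff lessThan_iff not_le)
  have each: "prob (F li) \<le> 3 * (\<tau> / 2 ^ fst li)\<^sup>2 / (a (fst li)) ^ 4" for li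
  proof -
    obtain l i where li: "li = (l, i)" by (cases li)
    have st: "s' l i - s l i = \<tau> / 2 ^ l" unfolding s_def s'_def by (simp add: field_simps)
    have pos: "0 < \<tau> / 2 ^ l" using \<tau> by simp
    have j0: "0 \<le> s l i" unfolding s_def using \<tau> by simp
    have D: "distributed M lborel (\<lambda>\<omega>. W b (s' l i) \<omega> - W b (s l i) \<omega>)
        (\<lambda>v. ennreal (normal_density 0 (sqrt (\<tau> / 2 ^ l)) v))"
      using distributed_W_increment[of "s l i" "s' l i" b] j0 st pos by simp
    have "prob {\<omega>\<in>space M. a l < \<bar>W b (s' l i) \<omega> - W b (s l i) \<omega>\<bar>} \<le> 3 * sqrt (\<tau> / 2 ^ l) ^ 4 / a l ^ 4"
      by (rule normal_tail_prob_le[OF prob_space_axioms D]) (use pos a in auto)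
    moreover have "sqrt (\<tau> / 2 ^ l) ^ 4 = (\<tau> / 2 ^ l)\<^sup>2"
    proof -
      have "sqrt (\<tau> / 2 ^ l) ^ 4 = (sqrt (\<tau> / 2 ^ l) ^ 2) ^ 2" by (simp flip: power_mult)
      also have "\<dots> = (\<tau> / 2 ^ l)\<^sup>2" using pos by simp
      finally show ?thesis .
    qed
    ultimately show ?thesis unfolding F_def li by simp
  qed
  have "prob (space M - dyadic_increments_le b a \<tau> j m) \<le> (\<Sum>li\<in>I. prob (F li))"
    unfolding eq by (rule finite_measure_subadditive_finite[OF fin Fs])
  also have "\<dots> \<le> (\<Sum>li\<in>I. 3 * (\<tau> / 2 ^ fst li)\<^sup>2 / (a (fst li)) ^ 4)"
    by (intro sum_mono each)
  also have "\<dots> = (\<Sum>l\<le>m. \<Sum>i<(2::nat)^l. 3 * (\<tau> / 2 ^ l)\<^sup>2 / (a l) ^ 4)"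
  proof -
    have "(\<Sum>li\<in>I. 3 * (\<tau> / 2 ^ fst li)\<^sup>2 / (a (fst li)) ^ 4) = (\<Sum>(l, i)\<in>I. 3 * (\<tau> / 2 ^ l)\<^sup>2 / (a l) ^ 4)"
      by (simp add: split_beta)
    also have "\<dots> = (\<Sum>l\<le>m. \<Sum>i<(2::nat)^l. 3 * (\<tau> / 2 ^ l)\<^sup>2 / (a l) ^ 4)"
      unfolding I_def by (rule sum.Sigma[symmetric]) auto
    finally show ?thesis .
  qed
  also have "\<dots> = (\<Sum>l\<le>m. 2 ^ l * (3 * (\<tau> / 2 ^ l)\<^sup>2 / (a l) ^ 4))"
    by simp
  finally show ?thesis .
qed


definition block_event :: "bool \<Rightarrow> (real \<Rightarrow> real) \<Rightarrow> (nat \<Rightarrow> real) \<Rightarrow> real \<Rightarrow> real \<Rightarrow> nat \<Rightarrow> nat \<Rightarrow> 'a set"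
  where "block_event b u a \<tau> r m j = increment_near b u \<tau> r j \<inter> dyadic_increments_le b a \<tau> j m"

lemma sets_block_event[measurable]: "block_event b u a \<tau> r m j \<in> events"
  unfolding block_event_def by measurable

definition fine_increment :: "real \<Rightarrow> bool \<times> nat \<Rightarrow> 'a \<Rightarrow> real" where
  "fine_increment D = (\<lambda>(b, k) \<omega>. W b (real (Suc k) * D) \<omega> - W b (real k * D) \<omega>)"

lemma indep_vars_fine_increment:
  assumes "0 < D"
  shows "indep_vars (\<lambda>_. borel) (fine_increment D) (UNIV \<times> {..<n})"
  unfolding fine_increment_def by (rule indep_vars_W_increments) (use assms in auto)

lemma sum_fine_increment:
  assumes "p \<le> q"
  shows "(\<Sum>k\<in>{p..<q}. fine_increment D (b, k) \<omega>) = W b (real q * D) \<omega> - W b (real p * D) \<omega>"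
  using sum_Suc_diff'[OF assms, of "\<lambda>k. W b (real k * D) \<omega>"] by (simp add: fine_increment_def)

text \<open>On the grid of mesh \<open>\<tau> / 2\<^sup>m\<close>, the \<open>j\<close>-th block consists of the fine increments with index
  in \<open>[j 2\<^sup>m, (j + 1) 2\<^sup>m)\<close>; a dyadic increment of level \<open>l \<le> m\<close> is a sum of \<open>2\<^sup>m\<^sup>-\<^sup>l\<close>
  consecutive ones.\<close>
lemma block_event_eq_fine_sums:
  fixes m j :: nat
  assumes "0 < \<tau>"
  defines "D \<equiv> \<tau> / 2 ^ m"
  shows "block_event b u a \<tau> r m j = {\<omega> \<in> space M.
     \<bar>(\<Sum>k\<in>{j * 2 ^ m..<Suc j * 2 ^ m}. fine_increment D (b, k) \<omega>)
        - (u (real (Suc j) * \<tau>) - u (real j * \<tau>))\<bar> \<le> r \<and>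
     (\<forall>l\<in>{..m}. \<forall>i\<in>{..<2 ^ l}.
        \<bar>\<Sum>k\<in>{j * 2 ^ m + i * 2 ^ (m - l)..<j * 2 ^ m + Suc i * 2 ^ (m - l)}. fine_increment D (b, k) \<omega>\<bar> \<le> a l)}"
proof -
  have whole: "(\<Sum>k\<in>{j * 2 ^ m..<Suc j * 2 ^ m}. fine_increment D (b, k) \<omega>)
      = W b (real (Suc j) * \<tau>) \<omega> - W b (real j * \<tau>) \<omega>" for \<omega>
  proof -
    have "j * 2 ^ m \<le> Suc j * 2 ^ m" by simp
    moreover have "real (j * 2 ^ m) * D = real j * \<tau>" "real (Suc j * 2 ^ m) * D = real (Suc j) * \<tau>"
      by (simp_all add: D_def field_simps)
    ultimately show ?thesis by (simp only: sum_fine_increment)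
  qed
  have dyadic: "(\<Sum>k\<in>{j * 2 ^ m + i * 2 ^ (m - l)..<j * 2 ^ m + Suc i * 2 ^ (m - l)}. fine_increment D (b, k) \<omega>)
      = W b (real j * \<tau> + real (Suc i) * \<tau> / 2 ^ l) \<omega> - W b (real j * \<tau> + real i * \<tau> / 2 ^ l) \<omega>"
    if "l \<le> m" for l i \<omega>
  proof -
    have le: "j * 2 ^ m + i * 2 ^ (m - l) \<le> j * 2 ^ m + Suc i * 2 ^ (m - l)" by simp
    show ?thesis unfolding sum_fine_increment[OF le] D_def dyadic_point_eq[OF that] by (rule refl)
  qed
  have "block_event b u a \<tau> r m j = {\<omega> \<in> space M.
     \<bar>W b (real (Suc j) * \<tau>) \<omega> - W b (real j * \<tau>) \<omega> - (u (real (Suc j) * \<tau>) - u (real j * \<tau>))\<bar> \<le> r \<and>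
     (\<forall>l\<in>{..m}. \<forall>i\<in>{..<2 ^ l}.
        \<bar>W b (real j * \<tau> + real (Suc i) * \<tau> / 2 ^ l) \<omega> - W b (real j * \<tau> + real i * \<tau> / 2 ^ l) \<omega>\<bar> \<le> a l)}"
    unfolding block_event_def increment_near_def dyadic_increments_le_def by blast
  also have "\<dots> = {\<omega> \<in> space M.
     \<bar>(\<Sum>k\<in>{j * 2 ^ m..<Suc j * 2 ^ m}. fine_increment D (b, k) \<omega>)
        - (u (real (Suc j) * \<tau>) - u (real j * \<tau>))\<bar> \<le> r \<and>
     (\<forall>l\<in>{..m}. \<forall>i\<in>{..<2 ^ l}.
        \<bar>\<Sum>k\<in>{j * 2 ^ m + i * 2 ^ (m - l)..<j * 2 ^ m + Suc i * 2 ^ (m - l)}. fine_increment D (b, k) \<omega>\<bar> \<le> a l)}"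
  proof (intro Collect_cong conj_cong refl ball_cong)
    fix \<omega> l i assume "l \<in> {..m}"
    then have "l \<le> m" by simp
    then show "(\<bar>W b (real j * \<tau> + real (Suc i) * \<tau> / 2 ^ l) \<omega> - W b (real j * \<tau> + real i * \<tau> / 2 ^ l) \<omega>\<bar> \<le> a l)
      = (\<bar>\<Sum>k\<in>{j * 2 ^ m + i * 2 ^ (m - l)..<j * 2 ^ m + Suc i * 2 ^ (m - l)}. fine_increment D (b, k) \<omega>\<bar> \<le> a l)"
      using dyadic[OF \<open>l \<le> m\<close>] by simp
  qed (simp only: whole)
  finally show ?thesis .
qed

lemma prob_INT_block_events_eq_prod:
  assumes "0 < \<tau>" and "0 < N"
  shows "prob (\<Inter>g\<in>UNIV \<times> {..<N}. block_event (fst g) (u (fst g)) a \<tau> r m (snd g))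
       = (\<Prod>g\<in>UNIV \<times> {..<N}. prob (block_event (fst g) (u (fst g)) a \<tau> r m (snd g)))"
proof -
  define K where "K g = {fst g} \<times> {snd g * 2 ^ m..<Suc (snd g) * 2 ^ m}" for g :: "bool \<times> nat"
  define S where "S g k = (\<lambda>f :: bool \<times> nat \<Rightarrow> real. \<Sum>k\<in>{snd g * 2 ^ m + fst k..<snd g * 2 ^ m + snd k}. f (fst g, k))"
    for g :: "bool \<times> nat" and k :: "nat \<times> nat"
  define P where "P g f \<longleftrightarrow>
      \<bar>S g (0, 2 ^ m) f - (u (fst g) (real (Suc (snd g)) * \<tau>) - u (fst g) (real (snd g) * \<tau>))\<bar> \<le> r \<and>
      (\<forall>l\<in>{..m}. \<forall>i\<in>{..<2 ^ l}. \<bar>S g (i * 2 ^ (m - l), Suc i * 2 ^ (m - l)) f\<bar> \<le> a l)" for g f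
  have sub: "{fst g} \<times> {snd g * 2 ^ m + fst k..<snd g * 2 ^ m + snd k} \<subseteq> K g" if "snd k \<le> 2 ^ m" for g k
    using that by (auto simp: K_def)
  have S_measurable: "S g k \<in> borel_measurable (PiM (K g) (\<lambda>_. borel))" if "snd k \<le> 2 ^ m" for g k
    unfolding S_def using sub[OF that] by (rule borel_measurable_PiM_sum_components)
  have dyadic_le: "Suc i * 2 ^ (m - l) \<le> 2 ^ m" if "l \<le> m" "i < 2 ^ l" for i l :: nat
  proof -
    have "Suc i * 2 ^ (m - l) \<le> 2 ^ l * 2 ^ (m - l)" using that by (intro mult_right_mono) auto
    also have "\<dots> = 2 ^ m" using that by (simp flip: power_add)
    finally show ?thesis .
  qed
  then have [measurable]: "S g (0, 2 ^ m) \<in> borel_measurable (PiM (K g) (\<lambda>_. borel))"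
    "l \<in> {..m} \<Longrightarrow> i \<in> {..<2 ^ l} \<Longrightarrow>
       S g (i * 2 ^ (m - l), Suc i * 2 ^ (m - l)) \<in> borel_measurable (PiM (K g) (\<lambda>_. borel))" for g l i
    by (auto intro!: S_measurable)
  have block_eq: "block_event (fst g) (u (fst g)) a \<tau> r m (snd g)
      = {\<omega> \<in> space M. P g (restrict (\<lambda>i. fine_increment (\<tau> / 2 ^ m) i \<omega>) (K g))}" for g
    unfolding block_event_eq_fine_sums[OF \<open>0 < \<tau>\<close>] P_def S_def K_def
    by (intro Collect_cong conj_cong refl arg_cong2[where f = "(\<le>)"] arg_cong[where f = abs]
        ball_cong arg_cong2[where f = "(-)"] sum.cong) (auto dest: dyadic_le)
  have "prob (\<Inter>g\<in>UNIV \<times> {..<N}. {\<omega> \<in> space M. P g (restrict (\<lambda>i. fine_increment (\<tau> / 2 ^ m) i \<omega>) (K g))})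
      = (\<Prod>g\<in>UNIV \<times> {..<N}. prob {\<omega> \<in> space M. P g (restrict (\<lambda>i. fine_increment (\<tau> / 2 ^ m) i \<omega>) (K g))})"
  proof (rule prob_INT_restrict_eq_prod[OF indep_vars_fine_increment[of _ "N * 2 ^ m"]])
    show "disjoint_family_on K (UNIV \<times> {..<N})"
      unfolding K_def by (rule disjoint_family_on_dyadic_blocks)
    show "K g \<subseteq> UNIV \<times> {..<N * 2 ^ m}" if "g \<in> UNIV \<times> {..<N}" for g
    proof -
      have "Suc (snd g) * 2 ^ m \<le> N * 2 ^ m" using that by (intro mult_right_mono) auto
      then show ?thesis by (auto simp: K_def)
    qed
    show "{f \<in> space (PiM (K g) (\<lambda>_. borel)). P g f} \<in> sets (PiM (K g) (\<lambda>_. borel))" for g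
      unfolding P_def by measurable
  qed (use assms in auto)
  then show ?thesis by (simp only: block_eq)
qed

lemma prob_block_event_ge:
  fixes u :: "real \<Rightarrow> real"
  assumes "0 < \<tau>" and "\<tau> \<le> T" and "0 < r" and "r \<le> \<tau>" and "0 < \<eta>" and "0 \<le> Lu"
    and u_incr: "\<bar>u (real (Suc j) * \<tau>) - u (real j * \<tau>)\<bar> \<le> Lu * \<tau>"
  shows "2 * exp (- ((Lu + 1)\<^sup>2 * T / 2)) / sqrt (2 * pi * T) * r - 150000 / \<eta> ^ 4 * \<tau>\<^sup>2
           \<le> prob (block_event b u (dyadic_weight \<eta>) \<tau> r m j)"
proof -
  define c where "c = exp (- ((Lu + 1)\<^sup>2 * T / 2)) / sqrt (2 * pi * T)"
  have "c \<le> normal_density 0 (sqrt \<tau>) (\<bar>u (real (Suc j) * \<tau>) - u (real j * \<tau>)\<bar> + r)"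
    unfolding c_def using assms by (intro normal_density_ge) (auto simp: algebra_simps)
  then have "2 * r * c \<le> 2 * r * normal_density 0 (sqrt \<tau>) (\<bar>u (real (Suc j) * \<tau>) - u (real j * \<tau>)\<bar> + r)"
    using \<open>0 < r\<close> by (intro mult_left_mono) auto
  also have "\<dots> \<le> prob (increment_near b u \<tau> r j)"
    by (rule prob_increment_near_ge[OF \<open>0 < \<tau>\<close> \<open>0 < r\<close>])
  also have "\<dots> \<le> prob (block_event b u (dyadic_weight \<eta>) \<tau> r m j)
                 + prob (space M - dyadic_increments_le b (dyadic_weight \<eta>) \<tau> j m)"
    unfolding block_event_def
    by (rule order.trans[OF finite_measure_mono measure_Un_le]) (auto simp: increment_near_def)
  finally have "2 * r * c \<le> prob (block_event b u (dyadic_weight \<eta>) \<tau> r m j)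
                 + prob (space M - dyadic_increments_le b (dyadic_weight \<eta>) \<tau> j m)" .
  moreover have "prob (space M - dyadic_increments_le b (dyadic_weight \<eta>) \<tau> j m) \<le> 150000 / \<eta> ^ 4 * \<tau>\<^sup>2"
    using prob_dyadic_increments_exceed_le[OF \<open>0 < \<tau>\<close>, of "dyadic_weight \<eta>" b j m]
      dyadic_tail_sum_le[OF \<open>0 < \<eta>\<close>, of \<tau> m] \<open>0 < \<eta>\<close>
    by (simp add: dyadic_weight_def)
  ultimately show ?thesis unfolding c_def by (simp add: algebra_simps)
qed

lemma prob_INT_block_events_ge:
  assumes "0 < \<tau>" and "0 < N" and "0 \<le> p"
    and p_le: "\<And>b j m. j < N \<Longrightarrow> p \<le> prob (block_event b (u b) a \<tau> r m j)"
  shows "p ^ (2 * N) \<le> prob (\<Inter>m. \<Inter>g\<in>UNIV \<times> {..<N}. block_event (fst g) (u (fst g)) a \<tau> r m (snd g))"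
proof -
  define G where "G m = (\<Inter>g\<in>UNIV \<times> {..<N}. block_event (fst g) (u (fst g)) a \<tau> r m (snd g))" for m
  have "p ^ (2 * N) = (\<Prod>g\<in>(UNIV :: bool set) \<times> {..<N}. p)"
    by (simp add: card_cartesian_product)
  also have "\<dots> \<le> prob (G m)" for m
    unfolding G_def prob_INT_block_events_eq_prod[OF assms(1,2)]
    using p_le \<open>0 \<le> p\<close> by (intro prod_mono) auto
  finally have le: "p ^ (2 * N) \<le> prob (G m)" for m .
  have "decseq G"
    unfolding G_def block_event_def dyadic_increments_le_def by (intro decseq_SucI) auto
  moreover have "G m \<in> events" for m
    using \<open>0 < N\<close> unfolding G_def by (intro sets.finite_INT) auto
  ultimately have "(\<lambda>m. prob (G m)) \<longlonglongrightarrow> prob (\<Inter>m. G m)"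
    by (intro finite_Lim_measure_decseq) auto
  then have "p ^ (2 * N) \<le> prob (\<Inter>m. G m)"
    using le by (intro LIMSEQ_le_const) auto
  then show ?thesis by (simp add: G_def)
qed

lemma W_near_grid_control:
  assumes "\<omega> \<in> space M" and "u 0 = 0" and near: "\<And>i. i < j \<Longrightarrow> \<omega> \<in> increment_near b u \<tau> r i"
  shows "\<bar>W b (real j * \<tau>) \<omega> - u (real j * \<tau>)\<bar> \<le> real j * r"
  using telescoping_deviation_le[of "\<lambda>i. W b (real i * \<tau>) \<omega>" "\<lambda>i. u (real i * \<tau>)"] near
    W_0[OF \<open>\<omega> \<in> space M\<close>] \<open>u 0 = 0\<close>
  by (simp add: increment_near_def)

text \<open>The chaining step of Levy's modulus-of-continuity argument.\<close>
lemma W_block_oscillation_le: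
  assumes "\<omega> \<in> space M" and "0 < \<tau>" and "\<And>m. \<omega> \<in> dyadic_increments_le b a \<tau> j m"
    and "\<And>m. (\<Sum>l\<le>m. a l) \<le> \<eta>" and "t \<in> {real j * \<tau>..real j * \<tau> + \<tau>}"
  shows "\<bar>W b t \<omega> - W b (real j * \<tau>) \<omega>\<bar> \<le> \<eta>"
proof (rule continuous_le_if_le_on_dyadics[where p = "real j * \<tau>" and h = \<tau> and s = t and C = \<eta>
      and f = "\<lambda>s. \<bar>W b s \<omega> - W b (real j * \<tau>) \<omega>\<bar>", OF \<open>0 < \<tau>\<close>])
  show "continuous_on {real j * \<tau>..real j * \<tau> + \<tau>} (\<lambda>s. \<bar>W b s \<omega> - W b (real j * \<tau>) \<omega>\<bar>)"
    by (intro continuous_intros continuous_on_W[OF \<open>\<omega> \<in> space M\<close>])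
  fix m k :: nat assume "k \<le> 2 ^ m"
  have "\<bar>W b (real j * \<tau> + real k * \<tau> / 2 ^ m) \<omega> - W b (real j * \<tau>) \<omega>\<bar> \<le> (\<Sum>l\<le>m. a l)"
    using assms(3)[of m] by (intro dyadic_chaining_bound[OF _ \<open>k \<le> 2 ^ m\<close>]) (auto simp: dyadic_increments_le_def)
  then show "\<bar>W b (real j * \<tau> + real k * \<tau> / 2 ^ m) \<omega> - W b (real j * \<tau>) \<omega>\<bar> \<le> \<eta>"
    using assms(4)[of m] by linarith
qed (use assms in auto)

lemma W_near_control_if_block_events:
  assumes "\<omega> \<in> space M" and "0 < \<tau>" and "0 < N" and "0 \<le> r" and "0 \<le> Lu"
    and "\<And>j m. j < N \<Longrightarrow> \<omega> \<in> block_event b u a \<tau> r m j"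
    and "\<And>m. (\<Sum>l\<le>m. a l) \<le> \<eta>" and "u 0 = 0"
    and u_lip: "\<And>s t. s \<in> {0..real N * \<tau>} \<Longrightarrow> t \<in> {0..real N * \<tau>} \<Longrightarrow> \<bar>u t - u s\<bar> \<le> Lu * \<bar>t - s\<bar>"
    and t: "t \<in> {0..real N * \<tau>}"
  shows "\<bar>W b t \<omega> - u t\<bar> \<le> real N * r + \<eta> + Lu * \<tau>"
proof -
  obtain j where "j < N" and j: "real j * \<tau> \<le> t" "t \<le> real (Suc j) * \<tau>"
    using grid_cell_exists[OF \<open>0 < \<tau>\<close> \<open>0 < N\<close> t] .
  have "\<bar>W b (real j * \<tau>) \<omega> - u (real j * \<tau>)\<bar> \<le> real j * r"
    using assms(6) \<open>j < N\<close> \<open>\<omega> \<in> space M\<close> \<open>u 0 = 0\<close>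
    by (intro W_near_grid_control) (auto simp: block_event_def)
  also have "\<dots> \<le> real N * r" using \<open>j < N\<close> \<open>0 \<le> r\<close> by (intro mult_right_mono) auto
  finally have grid: "\<bar>W b (real j * \<tau>) \<omega> - u (real j * \<tau>)\<bar> \<le> real N * r" .
  have block: "\<bar>W b t \<omega> - W b (real j * \<tau>) \<omega>\<bar> \<le> \<eta>"
    using assms(6) \<open>j < N\<close> j
    by (intro W_block_oscillation_le[OF \<open>\<omega> \<in> space M\<close> \<open>0 < \<tau>\<close> _ assms(7)])
      (auto simp: block_event_def algebra_simps)
  have "real j * \<tau> \<in> {0..real N * \<tau>}"
    using j(1) t \<open>0 < \<tau>\<close> unfolding atLeastAtMost_iff by (simp add: order_trans[OF j(1)])
  then have "\<bar>u t - u (real j * \<tau>)\<bar> \<le> Lu * \<bar>t - real j * \<tau>\<bar>" using u_lip t by blast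
  also have "\<dots> \<le> Lu * \<tau>" using j \<open>0 \<le> Lu\<close> by (intro mult_left_mono) (auto simp: algebra_simps)
  finally show ?thesis using grid block by linarith
qed

text \<open>With \<open>N\<close> blocks of length \<open>\<tau> = T / N\<close> and tolerance \<open>r = \<eta> / N\<close> per block, each block
  event has probability at least \<open>K r - C \<tau>\<^sup>2\<close>, which is positive for large \<open>N\<close> because
  \<open>\<tau>\<^sup>2\<close> is of order \<open>N\<^sup>-\<^sup>2\<close> while \<open>r\<close> is of order \<open>N\<^sup>-\<^sup>1\<close>; independence of the blocks then
  gives a positive lower bound for their intersection.\<close>
lemma tube_event_exists:
  fixes u :: "bool \<Rightarrow> real \<Rightarrow> real"
  assumes "0 < T" and "0 < \<delta>" and u0: "\<And>b. u b 0 = 0" and "0 \<le> Lu"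
    and u_lip: "\<And>b s t. s \<in> {0..T} \<Longrightarrow> t \<in> {0..T} \<Longrightarrow> \<bar>u b t - u b s\<bar> \<le> Lu * \<bar>t - s\<bar>"
  shows "\<exists>G\<in>events. 0 < prob G \<and> (\<forall>\<omega>\<in>G. \<forall>b. \<forall>t\<in>{0..T}. \<bar>W b t \<omega> - u b t\<bar> \<le> \<delta>)"
proof -
  define \<eta> where "\<eta> = min \<delta> T / 3"
  have "0 < \<eta>" "\<eta> \<le> T" "3 * \<eta> \<le> \<delta>" using assms by (auto simp: \<eta>_def)
  define K where "K = 2 * exp (- ((Lu + 1)\<^sup>2 * T / 2)) / sqrt (2 * pi * T)"
  define C where "C = 150000 / \<eta> ^ 4"
  have "0 < K" "0 < C" using \<open>0 < T\<close> \<open>0 < \<eta>\<close> by (simp_all add: K_def C_def)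
  define N :: nat where "N = nat \<lceil>max (Lu * T / \<eta>) (C * T\<^sup>2 / (K * \<eta>))\<rceil> + 1"
  have "0 < N" and N_gt: "Lu * T / \<eta> < real N" "C * T\<^sup>2 / (K * \<eta>) < real N"
    unfolding N_def by linarith+
  define \<tau> where "\<tau> = T / real N"
  define r where "r = \<eta> / real N"
  have "0 < \<tau>" "\<tau> \<le> T" "real N * \<tau> = T" "0 < r" "r \<le> \<tau>" "real N * r = \<eta>"
    using \<open>0 < T\<close> \<open>0 < N\<close> \<open>0 < \<eta>\<close> \<open>\<eta> \<le> T\<close>
    by (simp_all add: \<tau>_def r_def field_simps divide_right_mono)
  have "Lu * \<tau> \<le> \<eta>"
    using N_gt(1) \<open>0 < \<eta>\<close> \<open>0 < N\<close> by (simp add: \<tau>_def field_simps)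
  define p where "p = K * r - C * \<tau>\<^sup>2"
  have "0 < p"
  proof -
    have "C * T\<^sup>2 / (real N)\<^sup>2 < K * \<eta> / real N"
      using N_gt(2) \<open>0 < K\<close> \<open>0 < \<eta>\<close> \<open>0 < N\<close> by (simp add: field_simps power2_eq_square)
    then show ?thesis unfolding p_def r_def \<tau>_def by (simp add: power_divide)
  qed
  define G where "G = (\<Inter>m. \<Inter>g\<in>UNIV \<times> {..<N}. block_event (fst g) (u (fst g)) (dyadic_weight \<eta>) \<tau> r m (snd g))"
  have "(\<Inter>g\<in>UNIV \<times> {..<N}. block_event (fst g) (u (fst g)) (dyadic_weight \<eta>) \<tau> r m (snd g)) \<in> events"
    for m using \<open>0 < N\<close> by (intro sets.finite_INT) auto
  then have "G \<in> events" unfolding G_def by (intro sets.countable_INT) auto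
  have "p ^ (2 * N) \<le> prob G"
    unfolding G_def
  proof (rule prob_INT_block_events_ge[OF \<open>0 < \<tau>\<close> \<open>0 < N\<close> less_imp_le[OF \<open>0 < p\<close>]])
    fix b j m assume "j < N"
    then have "real (Suc j) * \<tau> \<le> T" "0 \<le> real j * \<tau>"
      using \<open>real N * \<tau> = T\<close> \<open>0 < \<tau>\<close> by (auto intro: mult_right_mono simp flip: of_nat_le_iff)
    then have "\<bar>u b (real (Suc j) * \<tau>) - u b (real j * \<tau>)\<bar> \<le> Lu * \<tau>"
      using u_lip[of "real j * \<tau>" "real (Suc j) * \<tau>" b] \<open>0 < \<tau>\<close> by (simp add: algebra_simps)
    then show "p \<le> prob (block_event b (u b) (dyadic_weight \<eta>) \<tau> r m j)"
      using prob_block_event_ge[of \<tau> T r \<eta> Lu "u b" j b m] assms \<open>0 < \<tau>\<close> \<open>\<tau> \<le> T\<close> \<open>0 < r\<close> \<open>r \<le> \<tau>\<close> \<open>0 < \<eta>\<close>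
      by (simp add: p_def K_def C_def)
  qed
  moreover have "\<bar>W b t \<omega> - u b t\<bar> \<le> \<delta>" if "\<omega> \<in> G" "t \<in> {0..T}" for \<omega> b t
  proof -
    have "\<bar>W b t \<omega> - u b t\<bar> \<le> real N * r + \<eta> + Lu * \<tau>"
    proof (rule W_near_control_if_block_events[OF _ \<open>0 < \<tau>\<close> \<open>0 < N\<close> less_imp_le[OF \<open>0 < r\<close>] \<open>0 \<le> Lu\<close>])
      show "\<omega> \<in> space M" using \<open>G \<in> events\<close> \<open>\<omega> \<in> G\<close> sets.sets_into_space by blast
      show "\<omega> \<in> block_event b (u b) (dyadic_weight \<eta>) \<tau> r m j" if "j < N" for j m
        using \<open>\<omega> \<in> G\<close> that by (auto simp: G_def)
      show "(\<Sum>l\<le>m. dyadic_weight \<eta> l) \<le> \<eta>" for m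
        using sum_dyadic_weight_le \<open>0 < \<eta>\<close> by simp
    qed (use u0 u_lip that \<open>real N * \<tau> = T\<close> in auto)
    then show ?thesis using \<open>real N * r = \<eta>\<close> \<open>Lu * \<tau> \<le> \<eta>\<close> \<open>3 * \<eta> \<le> \<delta>\<close> by linarith
  qed
  ultimately show ?thesis
    using \<open>G \<in> events\<close> \<open>0 < p\<close> by (intro bexI[of _ G]) (auto intro: order.strict_trans2[OF zero_less_power])
qed

end

section \<open>The support theorem\<close>

lemma sets_Collect_forall_Icc_le:
  fixes f :: "real \<Rightarrow> 'a \<Rightarrow> real"
  assumes "0 < T" and meas: "\<And>t. t \<in> {0..T} \<Longrightarrow> f t \<in> borel_measurable M"
    and cont: "\<And>\<omega>. \<omega> \<in> space M \<Longrightarrow> continuous_on {0..T} (\<lambda>t. f t \<omega>)"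
  shows "{\<omega> \<in> space M. \<forall>t\<in>{0..T}. f t \<omega> \<le> C} \<in> sets M"
proof -
  have dyadic: "real j * T / 2 ^ m \<in> {0..T}" if "j \<le> 2 ^ m" for j m :: nat
  proof -
    have "real j \<le> 2 ^ m" using that by (metis of_nat_le_iff of_nat_numeral of_nat_power)
    then have "real j * T \<le> 2 ^ m * T" using \<open>0 < T\<close> by (intro mult_right_mono) auto
    then show ?thesis using \<open>0 < T\<close> by (simp add: field_simps)
  qed
  have "{\<omega> \<in> space M. \<forall>t\<in>{0..T}. f t \<omega> \<le> C}
      = {\<omega> \<in> space M. \<forall>m. \<forall>j\<in>{..(2::nat) ^ m}. f (real j * T / 2 ^ m) \<omega> \<le> C}"
  proof (intro Collect_cong conj_cong refl iffI allI ballI)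
    fix \<omega> t assume "\<omega> \<in> space M" and "\<forall>m. \<forall>j\<in>{..(2::nat) ^ m}. f (real j * T / 2 ^ m) \<omega> \<le> C"
      and "t \<in> {0..T}"
    then show "f t \<omega> \<le> C"
      using continuous_le_if_le_on_dyadics[OF \<open>0 < T\<close>, of 0 "\<lambda>t. f t \<omega>" C t] cont by simp
  qed (use dyadic in auto)
  also have "\<dots> \<in> sets M"
  proof (intro sets.sets_Collect_countable_All sets.sets_Collect_finite_All)
    fix m j :: nat assume "j \<in> {..2 ^ m}"
    then have [measurable]: "f (real j * T / 2 ^ m) \<in> borel_measurable M"
      using dyadic meas by simp
    show "{\<omega> \<in> space M. f (real j * T / 2 ^ m) \<omega> \<le> C} \<in> sets M" by measurable
  qed auto
  finally show ?thesis .
qed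

lemma (in prob_space) prob_Collect_forall_Icc_le_pos:
  fixes f :: "real \<Rightarrow> 'a \<Rightarrow> real"
  assumes "0 < T" and "\<And>t. t \<in> {0..T} \<Longrightarrow> f t \<in> borel_measurable M"
    and "\<And>\<omega>. \<omega> \<in> space M \<Longrightarrow> continuous_on {0..T} (\<lambda>t. f t \<omega>)"
    and "G \<in> events" and "0 < prob G" and G_le: "\<And>\<omega> t. \<omega> \<in> G \<Longrightarrow> t \<in> {0..T} \<Longrightarrow> f t \<omega> \<le> C"
  shows "0 < prob {\<omega> \<in> space M. \<forall>t\<in>{0..T}. f t \<omega> \<le> C}"
proof -
  have "G \<subseteq> {\<omega> \<in> space M. \<forall>t\<in>{0..T}. f t \<omega> \<le> C}"
    using G_le sets.sets_into_space[OF \<open>G \<in> events\<close>] by blast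
  moreover have "{\<omega> \<in> space M. \<forall>t\<in>{0..T}. f t \<omega> \<le> C} \<in> events"
    by (rule sets_Collect_forall_Icc_le) (use assms in auto)
  ultimately have "prob G \<le> prob {\<omega> \<in> space M. \<forall>t\<in>{0..T}. f t \<omega> \<le> C}"
    by (rule finite_measure_mono)
  then show ?thesis using \<open>0 < prob G\<close> by linarith
qed

context brownian_pair
begin

lemma tube_around_C1_signal:
  assumes "0 < T" and "0 < \<delta>" and "U1 C1_differentiable_on UNIV" and "U2 C1_differentiable_on UNIV"
  obtains G where "G \<in> events" and "0 < prob G"
    and "\<And>\<omega>. \<omega> \<in> G \<Longrightarrow>
           increments_close T \<delta> (\<lambda>t. W1 t \<omega>) U1 \<and> increments_close T \<delta> (\<lambda>t. W2 t \<omega>) U2"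
proof -
  obtain L1 L2 where "0 \<le> L1" "0 \<le> L2"
    and L1: "\<forall>s\<in>{0..T}. \<forall>t\<in>{0..T}. \<bar>U1 t - U1 s\<bar> \<le> L1 * \<bar>t - s\<bar>"
    and L2: "\<forall>s\<in>{0..T}. \<forall>t\<in>{0..T}. \<bar>U2 t - U2 s\<bar> \<le> L2 * \<bar>t - s\<bar>"
    using C1_differentiable_imp_lipschitz_on assms(3,4) by metis
  define u where "u b t = (if b then U1 t - U1 0 else U2 t - U2 0)" for b t
  have u_lip: "\<bar>u b t - u b s\<bar> \<le> max L1 L2 * \<bar>t - s\<bar>" if "s \<in> {0..T}" "t \<in> {0..T}" for b s t
  proof -
    have "L1 * \<bar>t - s\<bar> \<le> max L1 L2 * \<bar>t - s\<bar>" "L2 * \<bar>t - s\<bar> \<le> max L1 L2 * \<bar>t - s\<bar>"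
      by (intro mult_right_mono; simp)+
    then show ?thesis using L1 L2 that by (cases b) (fastforce simp: u_def)+
  qed
  have "\<exists>G\<in>events. 0 < prob G \<and> (\<forall>\<omega>\<in>G. \<forall>b. \<forall>t\<in>{0..T}. \<bar>W b t \<omega> - u b t\<bar> \<le> \<delta>)"
    by (rule tube_event_exists[OF \<open>0 < T\<close> \<open>0 < \<delta>\<close> _ _ u_lip])
       (use \<open>0 \<le> L1\<close> in \<open>auto simp: u_def le_max_iff_disj\<close>)
  then obtain G where "G \<in> events" "0 < prob G" and tube: "\<forall>\<omega>\<in>G. \<forall>b. \<forall>t\<in>{0..T}. \<bar>W b t \<omega> - u b t\<bar> \<le> \<delta>"
    by blast
  show ?thesis
  proof (rule that[OF \<open>G \<in> events\<close> \<open>0 < prob G\<close>])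
    fix \<omega> assume "\<omega> \<in> G"
    then have "\<omega> \<in> space M" using \<open>G \<in> events\<close> sets.sets_into_space by blast
    then have "W1 0 \<omega> = 0" "W2 0 \<omega> = 0" using W_0[of \<omega> True] W_0[of \<omega> False] by (simp_all add: W_def)
    moreover have tube_\<omega>: "\<bar>W b t \<omega> - u b t\<bar> \<le> \<delta>" if "t \<in> {0..T}" for b t
      using tube \<open>\<omega> \<in> G\<close> that by blast
    ultimately show "increments_close T \<delta> (\<lambda>t. W1 t \<omega>) U1 \<and> increments_close T \<delta> (\<lambda>t. W2 t \<omega>) U2"
      using tube_\<omega>[of _ True] tube_\<omega>[of _ False] unfolding increments_close_def
      by (simp add: u_def W_eq)
  qed
qed

lemma prob_pos_if_implied_by_signal_close:
  fixes f :: "real \<Rightarrow> 'a \<Rightarrow> real"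
  assumes "0 < T" and "0 < \<delta>" and "U1 C1_differentiable_on UNIV" and "U2 C1_differentiable_on UNIV"
    and "\<And>t. t \<in> {0..T} \<Longrightarrow> f t \<in> borel_measurable M"
    and "\<And>\<omega>. \<omega> \<in> space M \<Longrightarrow> continuous_on {0..T} (\<lambda>t. f t \<omega>)"
    and implied: "\<And>\<omega> t. \<omega> \<in> space M \<Longrightarrow> increments_close T \<delta> (\<lambda>t. W1 t \<omega>) U1 \<Longrightarrow>
        increments_close T \<delta> (\<lambda>t. W2 t \<omega>) U2 \<Longrightarrow> t \<in> {0..T} \<Longrightarrow> f t \<omega> \<le> C"
  shows "0 < prob {\<omega> \<in> space M. \<forall>t\<in>{0..T}. f t \<omega> \<le> C}"
proof -
  obtain G where "G \<in> events" "0 < prob G" and tube: "\<And>\<omega>. \<omega> \<in> G \<Longrightarrow>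
      increments_close T \<delta> (\<lambda>t. W1 t \<omega>) U1 \<and> increments_close T \<delta> (\<lambda>t. W2 t \<omega>) U2"
    using tube_around_C1_signal[OF assms(1-4)] by blast
  show ?thesis
  proof (rule prob_Collect_forall_Icc_le_pos[OF assms(1,5,6) \<open>G \<in> events\<close> \<open>0 < prob G\<close>])
    fix \<omega> t assume "\<omega> \<in> G" and "t \<in> {0..T}"
    moreover from \<open>\<omega> \<in> G\<close> have "\<omega> \<in> space M" using sets.sets_into_space[OF \<open>G \<in> events\<close>] by blast
    ultimately show "f t \<omega> \<le> C" using implied tube by blast
  qed
qed

end

theorem lemma4p4:
  fixes \<gamma> h \<kappa>1 \<kappa>2 T :: real
    and M :: "'a measure"
    and W1 W2 :: "real \<Rightarrow> 'a \<Rightarrow> real"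
    and U1 U2 xt yt zt kt :: "real \<Rightarrow> real"
  assumes "\<gamma> > 0" and "0 < h" and "h < 1" and "\<kappa>1 > 0" and "\<kappa>2 > 0" and "T > 0"
    and "std_BM2 M W1 W2"
    and "U1 C1_differentiable_on UNIV" and "U2 C1_differentiable_on UNIV"
    and "U1 0 = 0" and "U2 0 = 0"
    and "reflected_solution \<gamma> h \<kappa>1 \<kappa>2 T U1 U2 xt yt zt kt"
  shows "\<forall>\<epsilon>>0. \<exists>\<epsilon>'>0. \<forall>p \<in> ball (xt 0, yt 0, zt 0) \<epsilon>'.
           \<forall>x y z k :: real \<Rightarrow> 'a \<Rightarrow> real.
             (\<forall>t\<in>{0..T}. x t \<in> borel_measurable M \<and> y t \<in> borel_measurable M \<and>
                          z t \<in> borel_measurable M \<and> k t \<in> borel_measurable M) \<and>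
             (\<forall>\<omega>\<in>space M. (x 0 \<omega>, y 0 \<omega>, z 0 \<omega>) = p \<and>
                reflected_solution \<gamma> h \<kappa>1 \<kappa>2 T (\<lambda>t. W1 t \<omega>) (\<lambda>t. W2 t \<omega>)
                  (\<lambda>t. x t \<omega>) (\<lambda>t. y t \<omega>) (\<lambda>t. z t \<omega>) (\<lambda>t. k t \<omega>))
             \<longrightarrow> measure M {\<omega>\<in>space M. \<forall>t\<in>{0..T}.
                    dist (x t \<omega>, y t \<omega>, z t \<omega>) (xt t, yt t, zt t) \<le> \<epsilon>} > 0"
proof (intro allI impI, goal_cases)
  case (1 \<epsilon>)
  interpret brownian_pair M W1 W2 by unfold_locales fact
  obtain \<epsilon>' \<delta> where "0 < \<epsilon>'" "0 < \<delta>" and stable: "\<And>V1 V2 x y z k.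
      reflected_solution \<gamma> h \<kappa>1 \<kappa>2 T V1 V2 x y z k \<Longrightarrow> (x 0, y 0, z 0) \<in> ball (xt 0, yt 0, zt 0) \<epsilon>' \<Longrightarrow>
      increments_close T \<delta> V1 U1 \<Longrightarrow> increments_close T \<delta> V2 U2 \<Longrightarrow>
      \<forall>t\<in>{0..T}. dist (x t, y t, z t) (xt t, yt t, zt t) \<le> \<epsilon>"
    using reflected_solution_stable[of \<gamma> h \<kappa>1 \<kappa>2 T U1 U2 xt yt zt kt \<epsilon>] assms \<open>\<epsilon> > 0\<close> by auto
  show ?case
  proof (intro exI[of _ \<epsilon>'] conjI ballI allI impI \<open>0 < \<epsilon>'\<close>, goal_cases)
    case (1 p x y z k)
    show ?case
    proof (rule prob_pos_if_implied_by_signal_close[OF \<open>T > 0\<close> \<open>0 < \<delta>\<close> assms(8,9)])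
      fix t assume "t \<in> {0..T}"
      with 1 have [measurable]: "x t \<in> borel_measurable M" "y t \<in> borel_measurable M"
        "z t \<in> borel_measurable M" by blast+
      show "(\<lambda>\<omega>. dist (x t \<omega>, y t \<omega>, z t \<omega>) (xt t, yt t, zt t)) \<in> borel_measurable M" by measurable
    next
      fix \<omega> assume "\<omega> \<in> space M"
      with 1 have "reflected_solution \<gamma> h \<kappa>1 \<kappa>2 T (\<lambda>t. W1 t \<omega>) (\<lambda>t. W2 t \<omega>)
          (\<lambda>t. x t \<omega>) (\<lambda>t. y t \<omega>) (\<lambda>t. z t \<omega>) (\<lambda>t. k t \<omega>)"
        and "(x 0 \<omega>, y 0 \<omega>, z 0 \<omega>) \<in> ball (xt 0, yt 0, zt 0) \<epsilon>'" by auto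
      note sol = this
      show "continuous_on {0..T} (\<lambda>t. dist (x t \<omega>, y t \<omega>, z t \<omega>) (xt t, yt t, zt t))"
        using reflected_solutionD(1-3)[OF sol(1)] reflected_solutionD(1-3)[OF assms(12)]
        by (intro continuous_intros)
      show "dist (x t \<omega>, y t \<omega>, z t \<omega>) (xt t, yt t, zt t) \<le> \<epsilon>"
        if "increments_close T \<delta> (\<lambda>t. W1 t \<omega>) U1" "increments_close T \<delta> (\<lambda>t. W2 t \<omega>) U2"
          and "t \<in> {0..T}" for t
        using stable[OF sol that(1,2)] that(3) by blast
    qed
  qed
qed

end
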